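(* Let $R$ be a field and consider persistence modules over $(R, \mathbb{R}_{\ge 0}, \mathbb{R})$. If $M$ is finitely presented and bounded, then $M$ admits a critical series and $C(\varepsilon(M)) = \chi_{\mathcal{O}}(M)$, i.e. for every $g \in \mathbb{R}$ the value $\chi_{\mathcal{O}}(M)(g)$ equals the coefficient of $x^g$ in $C(\varepsilon(M))$.
   Context: A persistence module over $(R,\mathbb{R}_{\ge 0},\mathbb{R})$ is an $\mathbb{R}$-graded $R$-vector space $M = \bigoplus_{g\in\mathbb{R}} M_g$ with an action of the monoid ring $P = R[\mathbb{R}_{\ge 0}]$ such that the monomial $s \in \mathbb{R}_{\ge0}$ maps $M_g$ into $M_{g+s}$; morphisms are graded $P$-module homomorphisms. Free persistence modules are direct sums of shifted copies of $P$ (generated by homogeneous elements); $M$ is finitely presented if it is the cokernel of a morphism between finitely generated free persistence modules, and bounded if $\{g : M_g \ne 0\}$ is contained in a bounded interval. For $a<b$ real, $\operatorname{Region}[a,b)$ is the persistence module that is $R$ in degrees $g\in[a,b)$ and $0$ elsewhere, with the action of $s$ from degree $g$ to $g+s$ the identity if $[g,g+s]\subseteq[a,b)$ and $0$ otherwise. Every finitely presented bounded $M$ is isomorphic to a finite direct sum $\bigoplus_{i=1}^n \operatorname{Region}[\alpha_i,\alpha_i+\ell_i)$ with $\alpha_i\in\mathbb{R}$, $0<\ell_i<\infty$; its barcode is $\varepsilon(M) = \sum_{i=1}^n x^{\alpha_i}y^{\ell_i}$ (a formal sum with real exponents), and for a barcode $f = \sum_i x^{\alpha_i}y^{\ell_i}$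 one sets $B(f) = \sum_i x^{\alpha_i}$, $D(f) = \sum_i x^{\alpha_i+\ell_i}$, $C(f) = B(f)-D(f)$ (formal finite integer combinations of $x^g$, $g\in\mathbb{R}$). For $g\in\mathbb{R}$, $M_{\prec g} = \sum_{h<g} (g-h)M_h \subseteq M_g$ and $\mathcal{O}_g(M) = M_g/M_{\prec g}$; this is an additive functor (morphisms act by the induced maps). Given a free resolution $\cdots\to F_1\to F_0\to M\to 0$, let $H_i(\mathcal{O}_g)(M)$ be the $i$-th homology of $\cdots\to\mathcal{O}_g(F_1)\to\mathcal{O}_g(F_0)\to 0$. $M$ admits a critical series if for each $g$ all these are finite-dimensional and only finitely many are nonzero; then $\chi_{\mathcal{O}}(M)(g) = \sum_i (-1)^i \dim H_i(\mathcal{O}_g)(M)$, identified with the formal sum $\sum_g \chi_{\mathcal{O}}(M)(g)x^g$. *)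

theory Defs
  imports Complex_Main
begin

text \<open>Vector spaces over a field 'k are modelled as subspaces of the function
space 'i \<Rightarrow> 'k with pointwise operations.\<close>

definition vzero :: "'i \<Rightarrow> 'k::field" where "vzero = (\<lambda>i. 0)"
definition vadd :: "('i \<Rightarrow> 'k::field) \<Rightarrow> ('i \<Rightarrow> 'k) \<Rightarrow> ('i \<Rightarrow> 'k)"
  where "vadd x y = (\<lambda>i. x i + y i)"
definition vscale :: "'k::field \<Rightarrow> ('i \<Rightarrow> 'k) \<Rightarrow> ('i \<Rightarrow> 'k)"
  where "vscale c x = (\<lambda>i. c * x i)"

definition lincomb :: "'t set \<Rightarrow> ('t \<Rightarrow> 'k::field) \<Rightarrow> ('t \<Rightarrow> 'i \<Rightarrow> 'k) \<Rightarrow> ('i \<Rightarrow> 'k)"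
  where "lincomb T c v = (\<lambda>i. \<Sum>t\<in>T. c t * v t i)"

definition lin_span :: "('i \<Rightarrow> 'k::field) set \<Rightarrow> ('i \<Rightarrow> 'k) set" where
  "lin_span S = {x. \<exists>T c. finite T \<and> T \<subseteq> S \<and> x = lincomb T c (\<lambda>t. t)}"

definition is_subspace :: "('i \<Rightarrow> 'k::field) set \<Rightarrow> bool" where
  "is_subspace S \<longleftrightarrow> vzero \<in> S \<and> (\<forall>x\<in>S. \<forall>y\<in>S. vadd x y \<in> S) \<and> (\<forall>c. \<forall>x\<in>S. vscale c x \<in> S)"

definition linear_on :: "('i \<Rightarrow> 'k::field) set \<Rightarrow> (('i \<Rightarrow> 'k) \<Rightarrow> ('j \<Rightarrow> 'k)) \<Rightarrow> bool" where
  "linear_on S f \<longleftrightarrow> (\<forall>x\<in>S. \<forall>y\<in>S. f (vadd x y) = vadd (f x) (f y)) \<and>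
                     (\<forall>c. \<forall>x\<in>S. f (vscale c x) = vscale c (f x))"

text \<open>Quotient dimension dim(W/U) (meaningful for subspaces U \<subseteq> W), and its finiteness.\<close>
definition qfin :: "('i \<Rightarrow> 'k::field) set \<Rightarrow> ('i \<Rightarrow> 'k) set \<Rightarrow> bool" where
  "qfin W U \<longleftrightarrow> (\<exists>B. finite B \<and> B \<subseteq> W \<and> W \<subseteq> lin_span (U \<union> B))"

definition qdim :: "('i \<Rightarrow> 'k::field) set \<Rightarrow> ('i \<Rightarrow> 'k) set \<Rightarrow> nat" where
  "qdim W U = (LEAST n. \<exists>B. finite B \<and> card B = n \<and> B \<subseteq> W \<and> W \<subseteq> lin_span (U \<union> B))"

text \<open>A persistence module over (k, R_{\<ge>0}, R): graded pieces M_g and the action of the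
monomial s \<ge> 0 from M_g to M_{g+s}.\<close>
record ('i, 'k) pmod =
  sp  :: "real \<Rightarrow> ('i \<Rightarrow> 'k) set"
  act :: "real \<Rightarrow> real \<Rightarrow> ('i \<Rightarrow> 'k) \<Rightarrow> ('i \<Rightarrow> 'k)"

definition is_pmod :: "('i, 'k::field) pmod \<Rightarrow> bool" where
  "is_pmod M \<longleftrightarrow>
     (\<forall>g. is_subspace (sp M g)) \<and>
     (\<forall>g s. s \<ge> 0 \<longrightarrow> linear_on (sp M g) (act M g s) \<and> act M g s ` sp M g \<subseteq> sp M (g + s)) \<and>
     (\<forall>g. \<forall>x\<in>sp M g. act M g 0 x = x) \<and>
     (\<forall>g s t. s \<ge> 0 \<longrightarrow> t \<ge> 0 \<longrightarrow> (\<forall>x\<in>sp M g. act M (g + s) t (act M g s x) = act M g (s + t) x))"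

definition morph :: "('i, 'k::field) pmod \<Rightarrow> ('j, 'k) pmod \<Rightarrow> (real \<Rightarrow> ('i \<Rightarrow> 'k) \<Rightarrow> ('j \<Rightarrow> 'k)) \<Rightarrow> bool" where
  "morph M N f \<longleftrightarrow> is_pmod M \<and> is_pmod N \<and>
     (\<forall>g. linear_on (sp M g) (f g) \<and> f g ` sp M g \<subseteq> sp N g) \<and>
     (\<forall>g s. s \<ge> 0 \<longrightarrow> (\<forall>x\<in>sp M g. f (g + s) (act M g s x) = act N g s (f g x)))"

text \<open>J is a homogeneous basis: pairs (b, a) with b \<in> M_a, such that for every g the elements
s^(g-a) b with a \<le> g form a basis (as an indexed family) of M_g; i.e. M \<cong> \<Oplus> P(-a).\<close>
definition free_basis :: "('i, 'k::field) pmod \<Rightarrow> (('i \<Rightarrow> 'k) \<times> real) set \<Rightarrow> bool" where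
  "free_basis M J \<longleftrightarrow> (\<forall>(b, a)\<in>J. b \<in> sp M a) \<and>
     (\<forall>g. (\<forall>T c. finite T \<longrightarrow> T \<subseteq> {(b, a)\<in>J. a \<le> g} \<longrightarrow>
              lincomb T c (\<lambda>(b, a). act M a (g - a) b) = vzero \<longrightarrow> (\<forall>t\<in>T. c t = 0)) \<and>
          (\<forall>x\<in>sp M g. \<exists>T c. finite T \<and> T \<subseteq> {(b, a)\<in>J. a \<le> g} \<and>
              x = lincomb T c (\<lambda>(b, a). act M a (g - a) b)))"

definition is_free :: "('i, 'k::field) pmod \<Rightarrow> bool" where
  "is_free M \<longleftrightarrow> is_pmod M \<and> (\<exists>J. free_basis M J)"

definition fg_free :: "('i, 'k::field) pmod \<Rightarrow> bool" where
  "fg_free M \<longleftrightarrow> is_pmod M \<and> (\<exists>J. finite J \<and> free_basis M J)"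

definition finitely_presented :: "('i, 'k::field) pmod \<Rightarrow> bool" where
  "finitely_presented M \<longleftrightarrow> is_pmod M \<and>
     (\<exists>(F0 :: (nat, 'k) pmod) (F1 :: (nat, 'k) pmod) d p.
        fg_free F0 \<and> fg_free F1 \<and> morph F1 F0 d \<and> morph F0 M p \<and>
        (\<forall>g. p g ` sp F0 g = sp M g \<and> {x\<in>sp F0 g. p g x = vzero} = d g ` sp F1 g))"

definition bounded_pmod :: "('i, 'k::field) pmod \<Rightarrow> bool" where
  "bounded_pmod M \<longleftrightarrow> (\<exists>a b. \<forall>g. sp M g \<noteq> {vzero} \<longrightarrow> a \<le> g \<and> g \<le> b)"

text \<open>The direct sum of the modules Region[\<alpha>_i, \<alpha>_i + \<ell>_i) for bars = [(\<alpha>_i, \<ell>_i)].\<close>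
definition region_sum :: "(real \<times> real) list \<Rightarrow> (nat, 'k::field) pmod" where
  "region_sum bars =
     \<lparr> sp = (\<lambda>g. {v. \<forall>i. v i \<noteq> 0 \<longrightarrow> i < length bars \<and> fst (bars ! i) \<le> g \<and>
                                      g < fst (bars ! i) + snd (bars ! i)}),
       act = (\<lambda>g s v. (\<lambda>i. if i < length bars \<and> g + s < fst (bars ! i) + snd (bars ! i) then v i else 0)) \<rparr>"

text \<open>M \<cong> \<Oplus>_i Region[\<alpha>_i, \<alpha>_i + \<ell>_i), 0 < \<ell>_i < \<infinity>; the barcode is then \<Sum> x^\<alpha>_i y^\<ell>_i.\<close>
definition barcode_decomp :: "('i, 'k::field) pmod \<Rightarrow> (real \<times> real) list \<Rightarrow> bool" where
  "barcode_decomp M bars \<longleftrightarrow> (\<forall>(al, len)\<in>set bars. 0 < len) \<and>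
     (\<exists>f. morph M (region_sum bars :: (nat, 'k) pmod) f \<and>
          (\<forall>g. bij_betw (f g) (sp M g) (sp (region_sum bars :: (nat, 'k) pmod) g)))"

text \<open>Coefficient of x^g in C(f) = B(f) - D(f).\<close>
definition C_coeff :: "(real \<times> real) list \<Rightarrow> real \<Rightarrow> int" where
  "C_coeff bars g = int (length (filter (\<lambda>(al, len). al = g) bars))
                  - int (length (filter (\<lambda>(al, len). al + len = g) bars))"

definition prec :: "('i, 'k::field) pmod \<Rightarrow> real \<Rightarrow> ('i \<Rightarrow> 'k) set" where
  "prec M g = lin_span (\<Union>h\<in>{h. h < g}. act M h (g - h) ` sp M h)"

text \<open>Free resolution ... \<rightarrow> F_1 \<rightarrow> F_0 \<rightarrow> M \<rightarrow> 0, with d i : F (i+1) \<rightarrow> F i and e : F 0 \<rightarrow> M.\<close>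
definition free_resolution :: "('i, 'k::field) pmod \<Rightarrow> (nat \<Rightarrow> ('j, 'k) pmod)
    \<Rightarrow> (nat \<Rightarrow> real \<Rightarrow> ('j \<Rightarrow> 'k) \<Rightarrow> ('j \<Rightarrow> 'k)) \<Rightarrow> (real \<Rightarrow> ('j \<Rightarrow> 'k) \<Rightarrow> ('i \<Rightarrow> 'k)) \<Rightarrow> bool" where
  "free_resolution M F d e \<longleftrightarrow>
     (\<forall>i. is_free (F i)) \<and> (\<forall>i. morph (F (Suc i)) (F i) (d i)) \<and> morph (F 0) M e \<and>
     (\<forall>g. e g ` sp (F 0) g = sp M g \<and>
          {x\<in>sp (F 0) g. e g x = vzero} = d 0 g ` sp (F 1) g \<and>
          (\<forall>i. {x\<in>sp (F (Suc i)) g. d i g x = vzero} = d (Suc i) g ` sp (F (Suc (Suc i))) g))"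

text \<open>H_i(O_g)(M) computed from the resolution: the homology of
O_g(F_{i+1}) \<rightarrow> O_g(F_i) \<rightarrow> O_g(F_{i-1}) with O_g(F) = F_g / F_{\<prec>g}, written as
the quotient cyc/bnd of subspaces of (F_i)_g (the preimages in F_i,g of kernel and image).\<close>
definition cyc :: "(nat \<Rightarrow> ('j, 'k::field) pmod) \<Rightarrow> (nat \<Rightarrow> real \<Rightarrow> ('j \<Rightarrow> 'k) \<Rightarrow> ('j \<Rightarrow> 'k))
    \<Rightarrow> real \<Rightarrow> nat \<Rightarrow> ('j \<Rightarrow> 'k) set" where
  "cyc F d g i = (if i = 0 then sp (F 0) g
                  else {x\<in>sp (F i) g. d (i - 1) g x \<in> prec (F (i - 1)) g})"

definition bnd :: "(nat \<Rightarrow> ('j, 'k::field) pmod) \<Rightarrow> (nat \<Rightarrow> real \<Rightarrow> ('j \<Rightarrow> 'k) \<Rightarrow> ('j \<Rightarrow> 'k))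
    \<Rightarrow> real \<Rightarrow> nat \<Rightarrow> ('j \<Rightarrow> 'k) set" where
  "bnd F d g i = lin_span (d i g ` sp (F (Suc i)) g \<union> prec (F i) g)"

definition critical_series :: "(nat \<Rightarrow> ('j, 'k::field) pmod) \<Rightarrow> (nat \<Rightarrow> real \<Rightarrow> ('j \<Rightarrow> 'k) \<Rightarrow> ('j \<Rightarrow> 'k)) \<Rightarrow> bool" where
  "critical_series F d \<longleftrightarrow>
     (\<forall>g. (\<forall>i. qfin (cyc F d g i) (bnd F d g i)) \<and> finite {i. \<not> cyc F d g i \<subseteq> bnd F d g i})"

definition chiO :: "(nat \<Rightarrow> ('j, 'k::field) pmod) \<Rightarrow> (nat \<Rightarrow> real \<Rightarrow> ('j \<Rightarrow> 'k) \<Rightarrow> ('j \<Rightarrow> 'k)) \<Rightarrow> real \<Rightarrow> int" where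
  "chiO F d g = (\<Sum>i\<in>{i. \<not> cyc F d g i \<subseteq> bnd F d g i}. (-1) ^ i * int (qdim (cyc F d g i) (bnd F d g i)))"

end

theory Submission
  imports Defs "HOL-Library.Function_Algebras"
begin

text \<open>Translations in a
  free module are injective, so a cycle of \<open>\<O>\<^sub>g(F\<^sub>\<bullet>)\<close> in homological degree \<open>i \<ge> 2\<close> lifts to a
  cycle of \<open>F\<^sub>\<bullet>\<close> in an earlier degree and is therefore a boundary: only \<open>H\<^sub>0\<close> and \<open>H\<^sub>1\<close> survive.
  Both are finite dimensional, because a finite presentation bounds \<open>dim M\<^sub>h\<close> uniformly in \<open>h\<close>, and
  \<open>n + 1\<close> cycles whose boundaries are translated from one common earlier degree become dependent
  modulo boundaries.

  If \<open>M \<cong> \<Oplus>\<^sub>i Region[\<alpha>\<^sub>i, \<alpha>\<^sub>i + \<ell>\<^sub>i)\<close>, then \<open>H\<^sub>0 = M\<^sub>g / M\<^sub>\<prec>\<^sub>g\<close> has the bars born at \<open>g\<close> as coordinates.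
  For \<open>H\<^sub>1\<close>, a cycle \<open>x\<close> has \<open>d\<^sub>0 x\<close> translated from some \<open>y\<close> of earlier degree whose image in \<open>M\<close>
  dies before reaching \<open>g\<close>; its coordinates on the bars dying exactly at \<open>g\<close> identify the class of
  \<open>x\<close>. Hence \<open>\<chi>\<^sub>\<O>(M)(g)\<close> is the number of bars born at \<open>g\<close> minus the number dying at \<open>g\<close>.

  Free resolutions exist because the kernel of a map \<open>F\<^sub>1 \<rightarrow> F\<^sub>0\<close> of free modules, \<open>F\<^sub>1\<close> finitely
  generated, is free: it has injective translations and is generated in the finitely many
  generator degrees of \<open>F\<^sub>1\<close>.\<close>

section \<open>Linear algebra in function spaces\<close>

interpretation V: vector_space "vscale :: 'k::field \<Rightarrow> ('i \<Rightarrow> 'k) \<Rightarrow> ('i \<Rightarrow> 'k)"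
  by unfold_locales (auto simp: vscale_def fun_eq_iff algebra_simps)

text \<open>Vectors are manipulated as elements of the vector space, not pointwise.\<close>

declare plus_fun_apply[simp del] zero_fun_apply[simp del]

lemma vzero_eq_zero: "vzero = 0"
  by (simp add: vzero_def fun_eq_iff zero_fun_apply)

lemma vadd_eq_plus: "vadd x y = x + y"
  by (simp add: vadd_def fun_eq_iff plus_fun_apply)

lemma sum_fun_apply: "(\<Sum>t\<in>T. (f t :: 'i \<Rightarrow> 'a::comm_monoid_add)) i = (\<Sum>t\<in>T. f t i)"
  by (induct T rule: infinite_finite_induct) (auto simp: zero_fun_apply plus_fun_apply)

lemma lincomb_eq_sum: "lincomb T c v = (\<Sum>t\<in>T. vscale (c t) (v t))"
  by (simp add: lincomb_def fun_eq_iff sum_fun_apply vscale_def)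

lemma lin_span_eq_span: "lin_span S = V.span S"
  by (auto simp: lin_span_def V.span_explicit lincomb_eq_sum)

lemma is_subspace_iff: "is_subspace S \<longleftrightarrow> V.subspace S"
  by (simp add: is_subspace_def V.subspace_def vzero_eq_zero vadd_eq_plus)

lemma linear_onI:
  assumes "\<And>x y. x \<in> S \<Longrightarrow> y \<in> S \<Longrightarrow> f (x + y) = f x + f y"
    and "\<And>c x. x \<in> S \<Longrightarrow> f (vscale c x) = vscale c (f x)"
  shows "linear_on S f"
  using assms by (simp add: linear_on_def vadd_eq_plus)

lemma linear_on_add: "linear_on S f \<Longrightarrow> x \<in> S \<Longrightarrow> y \<in> S \<Longrightarrow> f (x + y) = f x + f y"
  by (simp add: linear_on_def vadd_eq_plus)

lemma linear_on_scale: "linear_on S f \<Longrightarrow> x \<in> S \<Longrightarrow> f (vscale c x) = vscale c (f x)"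
  by (simp add: linear_on_def)

lemma linear_on_zero: "linear_on S f \<Longrightarrow> V.subspace S \<Longrightarrow> f 0 = 0"
  by (metis V.scale_zero_left V.subspace_0 linear_on_scale)

lemma linear_on_diff:
  assumes f: "linear_on S f" and S: "V.subspace S" and "x \<in> S" "y \<in> S"
  shows "f (x - y) = f x - f y"
proof -
  have "f x = f ((x - y) + y)"
    by simp
  also have "\<dots> = f (x - y) + f y"
    using assms by (intro linear_on_add[OF f] V.subspace_diff[OF S])
  finally show ?thesis
    by (simp add: algebra_simps)
qed

lemma subspace_lincomb:
  "V.subspace S \<Longrightarrow> (\<And>x. x \<in> C \<Longrightarrow> v x \<in> S) \<Longrightarrow> (\<Sum>x\<in>C. vscale (c x) (v x)) \<in> S"
  by (intro V.subspace_sum V.subspace_scale) auto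

lemma linear_on_lincomb:
  assumes f: "linear_on S f" and S: "V.subspace S" and v: "\<And>x. x \<in> C \<Longrightarrow> v x \<in> S"
  shows "f (\<Sum>x\<in>C. vscale (c x) (v x)) = (\<Sum>x\<in>C. vscale (c x) (f (v x)))"
  using v
proof (induction C rule: infinite_finite_induct)
  case (insert x C)
  then have "(\<Sum>x\<in>C. vscale (c x) (v x)) \<in> S"
    by (intro subspace_lincomb[OF S]) auto
  with insert show ?case
    by (simp add: linear_on_add[OF f] linear_on_scale[OF f] V.subspace_scale[OF S])
qed (simp_all add: linear_on_zero[OF f S])

lemma linear_on_span_image:
  assumes S: "V.subspace S" and f: "linear_on S f" and "B \<subseteq> S" and "x \<in> V.span B"
  shows "f x \<in> V.span (f ` B)"
proof -
  from \<open>x \<in> V.span B\<close> obtain t r where t: "finite t" "t \<subseteq> B" and x: "x = (\<Sum>a\<in>t. vscale (r a) a)"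
    unfolding V.span_explicit by blast
  have "f x = (\<Sum>a\<in>t. vscale (r a) (f a))"
    unfolding x using t \<open>B \<subseteq> S\<close> by (intro linear_on_lincomb[OF f S]) auto
  also have "\<dots> \<in> V.span (f ` B)"
    using t by (intro V.span_sum V.span_scale V.span_base) auto
  finally show ?thesis .
qed

lemma span_image_lincomb:
  assumes "x \<in> V.span (v ` S)"
  shows "\<exists>T c. finite T \<and> T \<subseteq> S \<and> x = (\<Sum>t\<in>T. vscale (c t) (v t))"
proof -
  obtain B r where B: "finite B" "B \<subseteq> v ` S" and x: "x = (\<Sum>b\<in>B. vscale (r b) b)"
    using assms unfolding V.span_explicit by blast
  obtain T where T: "T \<subseteq> S" "inj_on v T" "B = v ` T"
    using B(2) unfolding subset_image_inj by blast
  have "finite (v ` T)"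
    using B(1) T(3) by simp
  then have "finite T"
    using T(2) by (rule finite_imageD)
  moreover have "x = (\<Sum>t\<in>T. vscale (r (v t)) (v t))"
    unfolding x T(3) by (simp add: sum.reindex[OF T(2)])
  ultimately show ?thesis
    using T(1) by (intro exI[of _ T] exI[of _ "\<lambda>t. r (v t)"]) simp
qed

lemma linear_on_preimage_subspace:
  assumes S: "V.subspace S" and f: "linear_on S f" and P: "V.subspace P"
  shows "V.subspace {x\<in>S. f x \<in> P}"
  using V.subspace_0[OF S] linear_on_zero[OF f S] V.subspace_0[OF P]
    V.subspace_add[OF S] linear_on_add[OF f] V.subspace_add[OF P]
    V.subspace_scale[OF S] linear_on_scale[OF f] V.subspace_scale[OF P]
  unfolding V.subspace_def by simp

lemma kernel_subspace:
  assumes "V.subspace S" and "linear_on S f"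
  shows "V.subspace {x\<in>S. f x = 0}"
  using linear_on_preimage_subspace[OF assms V.subspace_single_0] by simp

lemma qfin_if_subset_span: "W \<subseteq> V.span U \<Longrightarrow> qfin W U"
  unfolding qfin_def lin_span_eq_span by (intro exI[of _ "{}"]) auto

lemma qdim_eq_0_if_subset_span: "W \<subseteq> V.span U \<Longrightarrow> qdim W U = 0"
  unfolding qdim_def lin_span_eq_span by (rule Least_eq_0) (auto intro!: exI[of _ "{}"])

lemma qfin_qdim_eqI:
  assumes B0: "finite B0" "B0 \<subseteq> W" "W \<subseteq> V.span (U \<union> B0)" "card B0 \<le> n"
    and minimal: "\<And>B. finite B \<Longrightarrow> B \<subseteq> W \<Longrightarrow> W \<subseteq> V.span (U \<union> B) \<Longrightarrow> n \<le> card B"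
  shows "qfin W U \<and> qdim W U = n"
proof -
  have ex: "\<exists>B. finite B \<and> card B = card B0 \<and> B \<subseteq> W \<and> W \<subseteq> lin_span (U \<union> B)"
    using B0 by (auto simp: lin_span_eq_span)
  have "qdim W U \<le> card B0"
    unfolding qdim_def by (rule Least_le) (rule ex)
  moreover have "\<exists>B. finite B \<and> card B = qdim W U \<and> B \<subseteq> W \<and> W \<subseteq> lin_span (U \<union> B)"
    unfolding qdim_def by (rule LeastI_ex) (use ex in blast)
  then obtain B where "finite B" "card B = qdim W U" "B \<subseteq> W" "W \<subseteq> V.span (U \<union> B)"
    by (auto simp: lin_span_eq_span)
  then have "n \<le> qdim W U"
    using minimal[of B] by simp
  moreover have "qfin W U"
    using B0 by (auto simp: qfin_def lin_span_eq_span)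
  ultimately show ?thesis
    using B0(4) by simp
qed

definition unit_vec :: "nat \<Rightarrow> nat \<Rightarrow> 'k::field" where
  "unit_vec i = (\<lambda>j. if j = i then 1 else 0)"

lemma lincomb_unit_vecs_apply:
  assumes "finite T"
  shows "(\<Sum>i\<in>T. vscale (u i) (unit_vec i)) j = (if j \<in> T then u j else 0)"
proof -
  have "(\<Sum>i\<in>T. vscale (u i) (unit_vec i)) j = (\<Sum>i\<in>T. if i = j then u j else 0)"
    unfolding sum_fun_apply by (intro sum.cong) (auto simp: vscale_def unit_vec_def)
  then show ?thesis
    using assms by simp
qed

lemma lincomb_unit_vecs:
  "finite S \<Longrightarrow> (\<And>i. v i \<noteq> 0 \<Longrightarrow> i \<in> S) \<Longrightarrow> (\<Sum>i\<in>S. vscale (v i) (unit_vec i)) = v"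
  by (auto simp: fun_eq_iff lincomb_unit_vecs_apply)

lemma inj_unit_vec: "inj (unit_vec :: nat \<Rightarrow> nat \<Rightarrow> 'k::field)"
  by (auto simp: inj_def unit_vec_def fun_eq_iff)

lemma independent_unit_vecs: "V.independent (unit_vec ` S :: (nat \<Rightarrow> 'k::field) set)"
  unfolding V.independent_explicit_finite_subsets
proof (intro allI impI ballI)
  fix T :: "(nat \<Rightarrow> 'k) set" and u v
  assume "T \<subseteq> unit_vec ` S" "finite T" and zero: "(\<Sum>w\<in>T. vscale (u w) w) = 0" and "v \<in> T"
  then obtain I where I: "T = unit_vec ` I" "finite I"
    using finite_imageD[OF _ inj_on_subset[OF inj_unit_vec]] by (metis subset_image_iff subset_UNIV)
  obtain i where i: "i \<in> I" "v = unit_vec i"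
    using \<open>v \<in> T\<close> I(1) by blast
  have "(\<Sum>j\<in>I. vscale (u (unit_vec j)) (unit_vec j)) = 0"
    using zero I by (simp add: sum.reindex[OF inj_on_subset[OF inj_unit_vec subset_UNIV]])
  then have "(\<Sum>j\<in>I. vscale (u (unit_vec j)) (unit_vec j)) i = 0"
    by (simp add: zero_fun_apply)
  then show "u v = 0"
    using i I(2) by (simp add: lincomb_unit_vecs_apply)
qed

lemma card_unit_vecs: "card (unit_vec ` S :: (nat \<Rightarrow> 'k::field) set) = card S"
  using card_image inj_on_subset[OF inj_unit_vec] by blast

lemma qdim_eq_card_if_coordinates:
  fixes \<phi> :: "('i \<Rightarrow> 'k::field) \<Rightarrow> nat \<Rightarrow> 'k"
  assumes W: "V.subspace W" and "U \<subseteq> W" and \<phi>: "linear_on W \<phi>"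
    and image: "\<phi> ` W = {v. \<forall>i. v i \<noteq> 0 \<longrightarrow> i \<in> S}" and kernel: "{x\<in>W. \<phi> x = 0} = U"
    and "finite S"
  shows "qfin W U \<and> qdim W U = card S"
proof -
  have "\<forall>i\<in>S. unit_vec i \<in> \<phi> ` W"
    unfolding image by (simp add: unit_vec_def)
  then have "\<forall>i\<in>S. \<exists>x\<in>W. \<phi> x = unit_vec i"
    by (metis imageE)
  then obtain xs where xs: "\<And>i. i \<in> S \<Longrightarrow> xs i \<in> W \<and> \<phi> (xs i) = unit_vec i"
    by metis
  have spans: "W \<subseteq> V.span (U \<union> xs ` S)"
  proof
    fix w assume w: "w \<in> W"
    define s where "s = (\<Sum>i\<in>S. vscale (\<phi> w i) (xs i))"
    have s: "s \<in> W"
      unfolding s_def using xs by (intro subspace_lincomb[OF W]) auto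
    have "\<phi> s = (\<Sum>i\<in>S. vscale (\<phi> w i) (unit_vec i))"
      unfolding s_def using xs by (simp add: linear_on_lincomb[OF \<phi> W])
    also have "\<dots> = \<phi> w"
      using image w \<open>finite S\<close> by (intro lincomb_unit_vecs) auto
    finally have "w - s \<in> U"
      using kernel w s by (auto simp: linear_on_diff[OF \<phi> W] V.subspace_diff[OF W])
    moreover have "s \<in> V.span (U \<union> xs ` S)"
      unfolding s_def by (intro V.span_sum V.span_scale V.span_base) auto
    ultimately have "(w - s) + s \<in> V.span (U \<union> xs ` S)"
      by (meson UnI1 V.span_add V.span_base)
    then show "w \<in> V.span (U \<union> xs ` S)"
      by simp
  qed
  have minimal: "card S \<le> card B" if B: "finite B" "B \<subseteq> W" "W \<subseteq> V.span (U \<union> B)" for B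
  proof -
    have "unit_vec ` S \<subseteq> V.span (\<phi> ` B)"
    proof clarify
      fix i assume i: "i \<in> S"
      have "\<phi> (xs i) \<in> V.span (\<phi> ` (U \<union> B))"
        using xs[OF i] B \<open>U \<subseteq> W\<close> by (intro linear_on_span_image[OF W \<phi>]) auto
      also have "\<dots> \<subseteq> V.span (insert 0 (\<phi> ` B))"
        using kernel by (intro V.span_mono) auto
      finally show "unit_vec i \<in> V.span (\<phi> ` B)"
        using xs[OF i] by (simp add: V.span_insert_0)
    qed
    then have "card (unit_vec ` S :: (nat \<Rightarrow> 'k) set) \<le> card (\<phi> ` B)"
      using V.independent_span_bound[OF finite_imageI[OF B(1)] independent_unit_vecs] by blast
    then show ?thesis
      using card_image_le[OF B(1), of \<phi>] by (simp add: card_unit_vecs)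
  qed
  show ?thesis
    using xs spans minimal \<open>finite S\<close> by (intro qfin_qdim_eqI[of "xs ` S"]) (auto intro: card_image_le)
qed

definition independent_mod :: "('i \<Rightarrow> 'k::field) set \<Rightarrow> ('i \<Rightarrow> 'k) set \<Rightarrow> bool" where
  "independent_mod U C \<longleftrightarrow>
     (\<forall>T r. finite T \<longrightarrow> T \<subseteq> C \<longrightarrow> (\<Sum>b\<in>T. vscale (r b) b) \<in> V.span U \<longrightarrow> (\<forall>b\<in>T. r b = 0))"

lemma independent_modD:
  "independent_mod U C \<Longrightarrow> finite T \<Longrightarrow> T \<subseteq> C \<Longrightarrow> (\<Sum>b\<in>T. vscale (r b) b) \<in> V.span U \<Longrightarrow>
     b \<in> T \<Longrightarrow> r b = 0"
  unfolding independent_mod_def by blast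

lemma complement_exists:
  assumes "U \<subseteq> W"
  obtains C where "C \<subseteq> W" "W \<subseteq> V.span (U \<union> C)" "independent_mod U C"
proof -
  obtain Bu where Bu: "Bu \<subseteq> U" "V.independent Bu" "U \<subseteq> V.span Bu"
    using V.maximal_independent_subset_extend[OF empty_subsetI V.independent_empty] by metis
  obtain Bw where Bw: "Bu \<subseteq> Bw" "Bw \<subseteq> W" "V.independent Bw" "W \<subseteq> V.span Bw"
    using V.maximal_independent_subset_extend[OF _ Bu(2)] Bu(1) assms by (metis subset_trans)
  have "V.span Bw \<subseteq> V.span (U \<union> (Bw - Bu))"
    using Bu(1) by (intro V.span_mono) auto
  moreover have "independent_mod U (Bw - Bu)"
    unfolding independent_mod_def
  proof (intro allI impI ballI)
    fix T r b assume T: "finite T" "T \<subseteq> Bw - Bu" and mod: "(\<Sum>b\<in>T. vscale (r b) b) \<in> V.span U"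
      and b: "b \<in> T"
    have "(\<Sum>b\<in>T. vscale (r b) b) \<in> V.span Bu"
      using mod V.span_minimal[OF Bu(3) V.subspace_span] by blast
    then obtain S q where S: "finite S" "S \<subseteq> Bu"
      and eq: "(\<Sum>b\<in>T. vscale (r b) b) = (\<Sum>x\<in>S. vscale (q x) x)"
      unfolding V.span_explicit by auto
    have disj: "T \<inter> S = {}"
      using T S by blast
    define u where "u x = (if x \<in> T then r x else - q x)" for x
    have "(\<Sum>x\<in>T \<union> S. vscale (u x) x) = (\<Sum>x\<in>T. vscale (u x) x) + (\<Sum>x\<in>S. vscale (u x) x)"
      using T S disj by (intro sum.union_disjoint) auto
    also have "(\<Sum>x\<in>T. vscale (u x) x) = (\<Sum>x\<in>T. vscale (r x) x)"
      by (simp add: u_def)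
    also have "(\<Sum>x\<in>S. vscale (u x) x) = (\<Sum>x\<in>S. vscale (- q x) x)"
      using disj by (intro sum.cong) (auto simp: u_def)
    also have "\<dots> = - (\<Sum>x\<in>S. vscale (q x) x)"
      by (simp add: V.scale_minus_left sum_negf)
    also have "(\<Sum>x\<in>T. vscale (r x) x) + - (\<Sum>x\<in>S. vscale (q x) x) = 0"
      by (simp only: eq add.right_inverse)
    finally have "(\<Sum>x\<in>T \<union> S. vscale (u x) x) = 0" .
    moreover have "T \<union> S \<subseteq> Bw" "finite (T \<union> S)"
      using T S Bw(1) by auto
    ultimately have "u b = 0"
      using Bw(3) b unfolding V.independent_explicit_finite_subsets by blast
    then show "r b = 0"
      using b by (simp add: u_def)
  qed
  ultimately show ?thesis
    using that Bw by blast
qed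

lemma qfin_if_bounded_dependence:
  assumes "U \<subseteq> W"
    and dep: "\<And>C. C \<subseteq> W \<Longrightarrow> finite C \<Longrightarrow> card C = Suc n \<Longrightarrow>
                 \<exists>c. (\<exists>x\<in>C. c x \<noteq> 0) \<and> (\<Sum>x\<in>C. vscale (c x) x) \<in> U"
  shows "qfin W U"
proof -
  obtain C where C: "C \<subseteq> W" "W \<subseteq> V.span (U \<union> C)" and indep: "independent_mod U C"
    using complement_exists[OF assms(1)] by blast
  have "finite C"
  proof (rule ccontr)
    assume "infinite C"
    then obtain C' where C': "C' \<subseteq> C" "finite C'" "card C' = Suc n"
      using infinite_arbitrarily_large by blast
    then obtain c where c: "\<exists>x\<in>C'. c x \<noteq> 0" "(\<Sum>x\<in>C'. vscale (c x) x) \<in> U"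
      using dep[of C'] C(1) by auto
    have "(\<Sum>x\<in>C'. vscale (c x) x) \<in> V.span U"
      using c(2) by (rule V.span_base)
    then have "\<forall>x\<in>C'. c x = 0"
      using indep C' unfolding independent_mod_def by blast
    then show False
      using c(1) by blast
  qed
  then show ?thesis
    using C unfolding qfin_def lin_span_eq_span by blast
qed

lemma nontrivial_relation_if_card_exceeds:
  fixes m :: "'a \<Rightarrow> ('i \<Rightarrow> 'k::field)"
  assumes C: "finite C" "card C = Suc n" and m: "\<And>x. x \<in> C \<Longrightarrow> m x \<in> V.span P"
    and P: "finite P" "card P \<le> n"
  shows "\<exists>c. (\<exists>x\<in>C. c x \<noteq> 0) \<and> (\<Sum>x\<in>C. vscale (c x) (m x)) = 0"
proof (cases "inj_on m C")
  case False
  then obtain x y where xy: "x \<in> C" "y \<in> C" "x \<noteq> y" "m x = m y"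
    unfolding inj_on_def by blast
  define c where "c z = (if z = x then 1 else if z = y then -1 else 0 :: 'k)" for z
  have "(\<Sum>z\<in>C. vscale (c z) (m z)) = (\<Sum>z\<in>{x, y}. vscale (c z) (m z))"
    using C xy by (intro sum.mono_neutral_right) (auto simp: c_def V.scale_zero_left)
  also have "\<dots> = 0"
    using xy by (simp add: c_def V.scale_minus_left)
  finally show ?thesis
    using xy by (intro exI[of _ c]) (auto simp: c_def)
next
  case True
  have "\<not> V.independent (m ` C)"
  proof
    assume "V.independent (m ` C)"
    then have "card (m ` C) \<le> card P"
      using V.independent_span_bound[OF P(1)] m by blast
    then show False
      using True C P by (simp add: card_image)
  qed
  then obtain T u where T: "finite T" "T \<subseteq> m ` C" "(\<Sum>v\<in>T. vscale (u v) v) = 0" "\<exists>v\<in>T. u v \<noteq> 0"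
    unfolding V.dependent_explicit by blast
  define c where "c x = (if m x \<in> T then u (m x) else 0)" for x
  have "(\<Sum>x\<in>C. vscale (c x) (m x)) = (\<Sum>v\<in>m ` C. vscale (if v \<in> T then u v else 0) v)"
    using True by (simp add: c_def sum.reindex)
  also have "\<dots> = (\<Sum>v\<in>T. vscale (if v \<in> T then u v else 0) v)"
    using C T(1,2) by (intro sum.mono_neutral_right) (auto simp: V.scale_zero_left)
  also have "\<dots> = (\<Sum>v\<in>T. vscale (u v) v)"
    by simp
  finally have "(\<Sum>x\<in>C. vscale (c x) (m x)) = 0"
    using T(3) by simp
  moreover obtain x where "x \<in> C" "c x \<noteq> 0"
    using T by (auto simp: c_def)
  ultimately show ?thesis
    by blast
qed

section \<open>Persistence modules\<close>

lemma pmod_subspace: "is_pmod M \<Longrightarrow> V.subspace (sp M g)"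
  by (simp add: is_pmod_def is_subspace_iff)

lemma pmod_act:
  assumes "is_pmod M" and "h \<le> g"
  shows pmod_linear_act: "linear_on (sp M h) (act M h (g - h))"
    and act_mem: "x \<in> sp M h \<Longrightarrow> act M h (g - h) x \<in> sp M g"
proof -
  have "linear_on (sp M h) (act M h s) \<and> act M h s ` sp M h \<subseteq> sp M (h + s)" if "0 \<le> s" for s
    using assms(1) that unfolding is_pmod_def by blast
  from this[of "g - h"] assms(2)
  show "linear_on (sp M h) (act M h (g - h))" "x \<in> sp M h \<Longrightarrow> act M h (g - h) x \<in> sp M g"
    by auto
qed

lemma act_shift_0: "is_pmod M \<Longrightarrow> x \<in> sp M g \<Longrightarrow> act M g 0 x = x"
  by (simp add: is_pmod_def)

lemma act_act:
  assumes M: "is_pmod M" and "h \<le> k" "k \<le> g" and x: "x \<in> sp M h"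
  shows "act M k (g - k) (act M h (k - h) x) = act M h (g - h) x"
proof -
  have "\<forall>s t. s \<ge> 0 \<longrightarrow> t \<ge> 0 \<longrightarrow> act M (h + s) t (act M h s x) = act M h (s + t) x"
    using M x unfolding is_pmod_def by blast
  from this[rule_format, of "k - h" "g - k"] assms(2,3)
  have "act M (h + (k - h)) (g - k) (act M h (k - h) x) = act M h ((k - h) + (g - k)) x"
    by simp
  then show ?thesis
    by simp
qed

lemma act_zero: "is_pmod M \<Longrightarrow> h \<le> g \<Longrightarrow> act M h (g - h) 0 = 0"
  by (rule linear_on_zero[OF pmod_linear_act pmod_subspace])

lemma act_add:
  "is_pmod M \<Longrightarrow> h \<le> g \<Longrightarrow> x \<in> sp M h \<Longrightarrow> y \<in> sp M h \<Longrightarrow>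
     act M h (g - h) (x + y) = act M h (g - h) x + act M h (g - h) y"
  by (rule linear_on_add[OF pmod_linear_act])

lemma act_scale:
  "is_pmod M \<Longrightarrow> h \<le> g \<Longrightarrow> x \<in> sp M h \<Longrightarrow> act M h (g - h) (vscale c x) = vscale c (act M h (g - h) x)"
  by (rule linear_on_scale[OF pmod_linear_act])

lemma act_diff:
  "is_pmod M \<Longrightarrow> h \<le> g \<Longrightarrow> x \<in> sp M h \<Longrightarrow> y \<in> sp M h \<Longrightarrow>
     act M h (g - h) (x - y) = act M h (g - h) x - act M h (g - h) y"
  by (rule linear_on_diff[OF pmod_linear_act pmod_subspace])

lemma act_lincomb:
  "is_pmod M \<Longrightarrow> h \<le> g \<Longrightarrow> (\<And>x. x \<in> C \<Longrightarrow> v x \<in> sp M h) \<Longrightarrow>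
     act M h (g - h) (\<Sum>x\<in>C. vscale (c x) (v x)) = (\<Sum>x\<in>C. vscale (c x) (act M h (g - h) (v x)))"
  by (rule linear_on_lincomb[OF pmod_linear_act pmod_subspace])

lemma morph_pmod_dom: "morph M N f \<Longrightarrow> is_pmod M"
  by (simp add: morph_def)

lemma morph_pmod_cod: "morph M N f \<Longrightarrow> is_pmod N"
  by (simp add: morph_def)

lemma morph_linear: "morph M N f \<Longrightarrow> linear_on (sp M g) (f g)"
  by (simp add: morph_def)

lemma morph_mem: "morph M N f \<Longrightarrow> x \<in> sp M g \<Longrightarrow> f g x \<in> sp N g"
  unfolding morph_def by blast

lemma morph_act:
  assumes f: "morph M N f" and "h \<le> g" and "x \<in> sp M h"
  shows "f g (act M h (g - h) x) = act N h (g - h) (f h x)"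
proof -
  have "\<forall>s. s \<ge> 0 \<longrightarrow> f (h + s) (act M h s x) = act N h s (f h x)"
    using assms unfolding morph_def by blast
  from this[rule_format, of "g - h"] assms(2)
  have "f (h + (g - h)) (act M h (g - h) x) = act N h (g - h) (f h x)"
    by simp
  then show ?thesis
    by simp
qed

lemma morph_zero: "morph M N f \<Longrightarrow> f g 0 = 0"
  by (rule linear_on_zero[OF morph_linear pmod_subspace[OF morph_pmod_dom]])

lemma morph_add: "morph M N f \<Longrightarrow> x \<in> sp M g \<Longrightarrow> y \<in> sp M g \<Longrightarrow> f g (x + y) = f g x + f g y"
  by (rule linear_on_add[OF morph_linear])

lemma morph_scale: "morph M N f \<Longrightarrow> x \<in> sp M g \<Longrightarrow> f g (vscale c x) = vscale c (f g x)"
  by (rule linear_on_scale[OF morph_linear])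

lemma morph_diff: "morph M N f \<Longrightarrow> x \<in> sp M g \<Longrightarrow> y \<in> sp M g \<Longrightarrow> f g (x - y) = f g x - f g y"
  by (rule linear_on_diff[OF morph_linear pmod_subspace[OF morph_pmod_dom]])

lemma morph_lincomb:
  "morph M N f \<Longrightarrow> (\<And>x. x \<in> C \<Longrightarrow> v x \<in> sp M g) \<Longrightarrow>
     f g (\<Sum>x\<in>C. vscale (c x) (v x)) = (\<Sum>x\<in>C. vscale (c x) (f g (v x)))"
  by (rule linear_on_lincomb[OF morph_linear pmod_subspace[OF morph_pmod_dom]])

lemma prec_eq_span: "prec M g = V.span (\<Union>h\<in>{h. h < g}. act M h (g - h) ` sp M h)"
  by (simp add: prec_def lin_span_eq_span)

lemma prec_subspace: "V.subspace (prec M g)"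
  by (simp add: prec_eq_span)

lemma prec_subset: "is_pmod M \<Longrightarrow> prec M g \<subseteq> sp M g"
  unfolding prec_eq_span by (rule V.span_minimal) (auto intro: act_mem pmod_subspace)

lemma act_mem_prec: "h < g \<Longrightarrow> y \<in> sp M h \<Longrightarrow> act M h (g - h) y \<in> prec M g"
  unfolding prec_eq_span by (rule V.span_base) auto

text \<open>The images of the \<open>M\<^sub>h\<close>, \<open>h < g\<close>, in \<open>M\<^sub>g\<close> increase with \<open>h\<close>, so their span is their
  union, and every element of \<open>M\<^sub>\<prec>\<^sub>g\<close> is a single translate from any degree close enough to \<open>g\<close>.\<close>

lemma prec_translate:
  assumes M: "is_pmod M" and x: "x \<in> prec M g" and "h0 < g"
  shows "\<exists>h y. h0 \<le> h \<and> h < g \<and> y \<in> sp M h \<and> x = act M h (g - h) y"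
proof -
  define Q where "Q = {x. \<forall>h0<g. \<exists>h y. h0 \<le> h \<and> h < g \<and> y \<in> sp M h \<and> x = act M h (g - h) y}"
  have raise: "\<exists>h' y'. h0 \<le> h' \<and> h' < g \<and> y' \<in> sp M h' \<and> act M h (g - h) y = act M h' (g - h') y'"
    if "h < g" "y \<in> sp M h" "h0 < g" for h y h0
  proof (intro exI conjI)
    show "act M h (g - h) y = act M (max h h0) (g - max h h0) (act M h (max h h0 - h) y)"
      using that by (simp add: act_act[OF M])
  qed (use that act_mem[OF M] in auto)
  have "V.subspace Q"
  proof (rule V.subspaceI)
    show "0 \<in> Q"
      unfolding Q_def
    proof (intro CollectI allI impI)
      fix h0 assume "h0 < g"
      then show "\<exists>h y. h0 \<le> h \<and> h < g \<and> y \<in> sp M h \<and> 0 = act M h (g - h) y"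
        using act_zero[OF M, of h0 g] V.subspace_0[OF pmod_subspace[OF M]]
        by (intro exI[of _ h0] exI[of _ 0]) auto
    qed
  next
    fix x y assume "x \<in> Q" "y \<in> Q"
    show "x + y \<in> Q"
      unfolding Q_def
    proof (intro CollectI allI impI)
      fix h0 assume "h0 < g"
      with \<open>x \<in> Q\<close> obtain h1 y1 where 1: "h0 \<le> h1" "h1 < g" "y1 \<in> sp M h1" "x = act M h1 (g - h1) y1"
        unfolding Q_def by blast
      with \<open>y \<in> Q\<close> obtain h2 y2 where 2: "h1 \<le> h2" "h2 < g" "y2 \<in> sp M h2" "y = act M h2 (g - h2) y2"
        unfolding Q_def by blast
      have y1': "act M h1 (h2 - h1) y1 \<in> sp M h2"
        using 1 2 by (intro act_mem[OF M])
      have "x + y = act M h2 (g - h2) (act M h1 (h2 - h1) y1 + y2)"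
        using 1 2 y1' by (simp add: act_add[OF M] act_act[OF M])
      moreover have "act M h1 (h2 - h1) y1 + y2 \<in> sp M h2"
        using y1' 2(3) by (rule V.subspace_add[OF pmod_subspace[OF M]])
      ultimately show "\<exists>h ya. h0 \<le> h \<and> h < g \<and> ya \<in> sp M h \<and> x + y = act M h (g - h) ya"
        using 1 2 by (intro exI[of _ h2]) auto
    qed
  next
    fix c x assume "x \<in> Q"
    show "vscale c x \<in> Q"
      unfolding Q_def
    proof (intro CollectI allI impI)
      fix h0 assume "h0 < g"
      with \<open>x \<in> Q\<close> obtain h y where h: "h0 \<le> h" "h < g" "y \<in> sp M h" "x = act M h (g - h) y"
        unfolding Q_def by blast
      then have "vscale c x = act M h (g - h) (vscale c y)"
        by (simp add: act_scale[OF M])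
      then show "\<exists>h ya. h0 \<le> h \<and> h < g \<and> ya \<in> sp M h \<and> vscale c x = act M h (g - h) ya"
        using h V.subspace_scale[OF pmod_subspace[OF M]] by blast
    qed
  qed
  moreover have "(\<Union>h\<in>{h. h < g}. act M h (g - h) ` sp M h) \<subseteq> Q"
    unfolding Q_def
  proof (intro subsetI CollectI allI impI)
    fix z h0 assume "z \<in> (\<Union>h\<in>{h. h < g}. act M h (g - h) ` sp M h)" "h0 < g"
    then obtain h y where "h < g" "y \<in> sp M h" "z = act M h (g - h) y"
      by blast
    then show "\<exists>h y. h0 \<le> h \<and> h < g \<and> y \<in> sp M h \<and> z = act M h (g - h) y"
      using raise[of h y h0] \<open>h0 < g\<close> by simp
  qed
  ultimately have "prec M g \<subseteq> Q"
    unfolding prec_eq_span by (intro V.span_minimal)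
  then show ?thesis
    using x \<open>h0 < g\<close> unfolding Q_def by blast
qed

lemma prec_translateE:
  assumes "is_pmod M" and "x \<in> prec M g"
  obtains h y where "h < g" "y \<in> sp M h" "x = act M h (g - h) y"
  using prec_translate[OF assms, of "g - 1"] by auto

lemma morph_prec:
  assumes f: "morph M N f" and x: "x \<in> prec M g"
  shows "f g x \<in> prec N g"
proof -
  obtain h y where h: "h < g" "y \<in> sp M h" "x = act M h (g - h) y"
    using prec_translateE[OF morph_pmod_dom[OF f] x] .
  then show ?thesis
    using act_mem_prec[OF h(1) morph_mem[OF f h(2)]] morph_act[OF f, of h g y] by simp
qed

lemma morph_comp:
  assumes f: "morph A B f" and f': "morph B C f'"
  shows "morph A C (\<lambda>g x. f' g (f g x))"
  unfolding morph_def
proof (intro conjI allI impI ballI)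
  show "is_pmod A" "is_pmod C"
    using f f' by (simp_all add: morph_def)
  fix g
  show "linear_on (sp A g) (\<lambda>x. f' g (f g x))"
    by (rule linear_onI)
      (simp_all add: morph_add[OF f] morph_add[OF f'] morph_scale[OF f] morph_scale[OF f'] morph_mem[OF f])
  show "(\<lambda>x. f' g (f g x)) ` sp A g \<subseteq> sp C g"
    using morph_mem[OF f] morph_mem[OF f'] by blast
  fix s :: real and x assume s: "0 \<le> s" and x: "x \<in> sp A g"
  have "f (g + s) (act A g s x) = act B g s (f g x)"
    using f s x unfolding morph_def by blast
  moreover have "f' (g + s) (act B g s (f g x)) = act C g s (f' g (f g x))"
    using f' s morph_mem[OF f x] unfolding morph_def by blast
  ultimately show "f' (g + s) (f (g + s) (act A g s x)) = act C g s (f' g (f g x))"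
    by simp
qed

text \<open>A pair \<open>(b, a)\<close> with \<open>b \<in> M\<^sub>a\<close> stands for a homogeneous generator; \<open>translate M g\<close>
  moves it to degree \<open>g\<close>.\<close>

definition translate :: "('i, 'k::field) pmod \<Rightarrow> real \<Rightarrow> ('i \<Rightarrow> 'k) \<times> real \<Rightarrow> ('i \<Rightarrow> 'k)" where
  "translate M g = (\<lambda>(b, a). act M a (g - a) b)"

lemma translate_mem:
  "is_pmod M \<Longrightarrow> fst t \<in> sp M (snd t) \<Longrightarrow> snd t \<le> g \<Longrightarrow> translate M g t \<in> sp M g"
  by (auto simp: translate_def act_mem split: prod.splits)

lemma act_translate:
  "is_pmod M \<Longrightarrow> fst t \<in> sp M (snd t) \<Longrightarrow> snd t \<le> h \<Longrightarrow> h \<le> g \<Longrightarrow>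
     act M h (g - h) (translate M h t) = translate M g t"
  by (auto simp: translate_def act_act split: prod.splits)

lemma free_basis_altdef:
  "free_basis M J \<longleftrightarrow> (\<forall>t\<in>J. fst t \<in> sp M (snd t)) \<and>
     (\<forall>g. (\<forall>T c. finite T \<longrightarrow> T \<subseteq> {t\<in>J. snd t \<le> g} \<longrightarrow>
              (\<Sum>t\<in>T. vscale (c t) (translate M g t)) = 0 \<longrightarrow> (\<forall>t\<in>T. c t = 0)) \<and>
          (\<forall>x\<in>sp M g. \<exists>T c. finite T \<and> T \<subseteq> {t\<in>J. snd t \<le> g} \<and>
              x = (\<Sum>t\<in>T. vscale (c t) (translate M g t))))"
proof -
  have "{(b, a)\<in>J. a \<le> g} = {t\<in>J. snd t \<le> g}" for g
    by auto
  moreover have "(\<forall>(b, a)\<in>J. b \<in> sp M a) \<longleftrightarrow> (\<forall>t\<in>J. fst t \<in> sp M (snd t))"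
    by auto
  ultimately show ?thesis
    unfolding free_basis_def translate_def[symmetric] lincomb_eq_sum vzero_eq_zero by simp
qed

lemma free_basis_mem: "free_basis M J \<Longrightarrow> t \<in> J \<Longrightarrow> fst t \<in> sp M (snd t)"
  by (simp add: free_basis_altdef)

lemma free_basis_lincomb:
  assumes "free_basis M J" and "x \<in> sp M g"
  obtains T c where "finite T" "T \<subseteq> {t\<in>J. snd t \<le> g}" "x = (\<Sum>t\<in>T. vscale (c t) (translate M g t))"
proof -
  have "\<forall>x\<in>sp M g. \<exists>T c. finite T \<and> T \<subseteq> {t\<in>J. snd t \<le> g} \<and>
          x = (\<Sum>t\<in>T. vscale (c t) (translate M g t))"
    using assms(1) by (simp add: free_basis_altdef)
  then show thesis
    using assms(2) that by blast
qed

lemma free_basis_independent: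
  assumes "free_basis M J" "finite T" "T \<subseteq> {t\<in>J. snd t \<le> g}"
    and "(\<Sum>t\<in>T. vscale (c t) (translate M g t)) = 0" and "t \<in> T"
  shows "c t = 0"
proof -
  have "\<forall>T c. finite T \<longrightarrow> T \<subseteq> {t\<in>J. snd t \<le> g} \<longrightarrow>
          (\<Sum>t\<in>T. vscale (c t) (translate M g t)) = 0 \<longrightarrow> (\<forall>t\<in>T. c t = 0)"
    using assms(1) by (simp add: free_basis_altdef)
  then show ?thesis
    using assms(2-5) by blast
qed

lemma free_basis_span:
  assumes "free_basis M J"
  shows "sp M g \<subseteq> V.span (translate M g ` {t\<in>J. snd t \<le> g})"
proof
  fix x assume "x \<in> sp M g"
  then obtain T c where T: "finite T" "T \<subseteq> {t\<in>J. snd t \<le> g}"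
    and x: "x = (\<Sum>t\<in>T. vscale (c t) (translate M g t))"
    using free_basis_lincomb[OF assms] by blast
  have "(\<Sum>t\<in>T. vscale (c t) (translate M g t)) \<in> V.span (translate M g ` {t\<in>J. snd t \<le> g})"
    using T by (intro V.span_sum V.span_scale V.span_base) auto
  then show "x \<in> V.span (translate M g ` {t\<in>J. snd t \<le> g})"
    by (simp add: x)
qed

lemma free_act_eq_0:
  assumes "is_free M" and hg: "h \<le> g" and x: "x \<in> sp M h" and "act M h (g - h) x = 0"
  shows "x = 0"
proof -
  have M: "is_pmod M"
    using assms(1) by (simp add: is_free_def)
  obtain J where J: "free_basis M J"
    using assms(1) by (auto simp: is_free_def)
  obtain T c where T: "finite T" "T \<subseteq> {t\<in>J. snd t \<le> h}"
    and x_eq: "x = (\<Sum>t\<in>T. vscale (c t) (translate M h t))"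
    using free_basis_lincomb[OF J x] .
  have T_J: "t \<in> J" "snd t \<le> h" if "t \<in> T" for t
    using that T(2) by auto
  have "act M h (g - h) x = (\<Sum>t\<in>T. vscale (c t) (act M h (g - h) (translate M h t)))"
    unfolding x_eq using hg T_J free_basis_mem[OF J] by (intro act_lincomb[OF M] translate_mem[OF M]) auto
  also have "\<dots> = (\<Sum>t\<in>T. vscale (c t) (translate M g t))"
    using hg T_J free_basis_mem[OF J] by (simp add: act_translate[OF M])
  finally have "(\<Sum>t\<in>T. vscale (c t) (translate M g t)) = 0"
    using assms(4) by simp
  then have "\<forall>t\<in>T. c t = 0"
    using T hg by (intro ballI free_basis_independent[OF J T(1)]) auto
  then show ?thesis
    by (simp add: x_eq)
qed

lemma free_act_inj:
  assumes F: "is_free M" and hg: "h \<le> g" and x: "x \<in> sp M h" and y: "y \<in> sp M h"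
    and eq: "act M h (g - h) x = act M h (g - h) y"
  shows "x = y"
proof -
  have M: "is_pmod M"
    using F by (simp add: is_free_def)
  have "act M h (g - h) (x - y) = 0"
    using eq by (simp add: act_diff[OF M hg x y])
  then have "x - y = 0"
    by (rule free_act_eq_0[OF F hg V.subspace_diff[OF pmod_subspace[OF M] x y]])
  then show ?thesis
    by simp
qed

section \<open>Homology of \<open>\<O>\<^sub>g\<close> along a free resolution\<close>

locale resolution =
  fixes M :: "('i, 'k::field) pmod" and F :: "nat \<Rightarrow> ('j, 'k) pmod"
    and d :: "nat \<Rightarrow> real \<Rightarrow> ('j \<Rightarrow> 'k) \<Rightarrow> ('j \<Rightarrow> 'k)" and e :: "real \<Rightarrow> ('j \<Rightarrow> 'k) \<Rightarrow> ('i \<Rightarrow> 'k)"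
  assumes resolution: "free_resolution M F d e"
begin

lemma free: "is_free (F i)"
  using resolution by (simp add: free_resolution_def)

lemma pmod: "is_pmod (F i)"
  using free by (simp add: is_free_def)

lemma subspace: "V.subspace (sp (F i) g)"
  by (rule pmod_subspace[OF pmod])

lemma morph_d: "morph (F (Suc i)) (F i) (d i)"
  using resolution by (simp add: free_resolution_def)

lemma morph_d0: "morph (F 1) (F 0) (d 0)"
  using morph_d[of 0] by simp

lemma morph_e: "morph (F 0) M e"
  using resolution by (simp add: free_resolution_def)

lemma e_surj: "e g ` sp (F 0) g = sp M g"
  using resolution by (simp add: free_resolution_def)

lemma ker_e: "{x\<in>sp (F 0) g. e g x = 0} = d 0 g ` sp (F 1) g"
  using resolution by (simp add: free_resolution_def vzero_eq_zero)

lemma ker_d: "{x\<in>sp (F (Suc i)) g. d i g x = 0} = d (Suc i) g ` sp (F (Suc (Suc i))) g"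
  using resolution by (simp add: free_resolution_def vzero_eq_zero)

lemma e_d: "z \<in> sp (F 1) g \<Longrightarrow> e g (d 0 g z) = 0"
  using ker_e[of g] by blast

lemma d_d: "z \<in> sp (F (Suc (Suc i))) g \<Longrightarrow> d i g (d (Suc i) g z) = 0"
  using ker_d[of i g] by blast

lemma exact_e: "x \<in> sp (F 0) g \<Longrightarrow> e g x = 0 \<Longrightarrow> \<exists>z\<in>sp (F 1) g. x = d 0 g z"
  using ker_e[of g] by blast

lemma exact_d: "x \<in> sp (F (Suc i)) g \<Longrightarrow> d i g x = 0 \<Longrightarrow> \<exists>z\<in>sp (F (Suc (Suc i))) g. x = d (Suc i) g z"
  using ker_d[of i g] by blast

lemma cyc_0: "cyc F d g 0 = sp (F 0) g"
  by (simp add: cyc_def)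

lemma cyc_Suc: "cyc F d g (Suc i) = {x\<in>sp (F (Suc i)) g. d i g x \<in> prec (F i) g}"
  by (simp add: cyc_def)

lemma bnd_eq_span: "bnd F d g i = V.span (d i g ` sp (F (Suc i)) g \<union> prec (F i) g)"
  by (simp add: bnd_def lin_span_eq_span)

lemma bnd_subspace: "V.subspace (bnd F d g i)"
  by (simp add: bnd_eq_span)

lemma d_mem_bnd: "z \<in> sp (F (Suc i)) g \<Longrightarrow> d i g z \<in> bnd F d g i"
  unfolding bnd_eq_span by (rule V.span_base) blast

lemma prec_subset_bnd: "prec (F i) g \<subseteq> bnd F d g i"
  unfolding bnd_eq_span by (blast intro: V.span_base)

lemma cyc_subspace: "V.subspace (cyc F d g i)"
proof (cases i)
  case 0
  then show ?thesis
    by (simp add: cyc_0 subspace)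
next
  case (Suc k)
  then show ?thesis
    unfolding Suc cyc_Suc
    by (intro linear_on_preimage_subspace[OF subspace morph_linear[OF morph_d] prec_subspace])
qed

lemma bnd_subset_cyc: "bnd F d g i \<subseteq> cyc F d g i"
  unfolding bnd_eq_span
proof (rule V.span_minimal[OF _ cyc_subspace], safe)
  fix z assume z: "z \<in> sp (F (Suc i)) g"
  show "d i g z \<in> cyc F d g i"
  proof (cases i)
    case 0
    then show ?thesis
      using morph_mem[OF morph_d z] by (simp add: cyc_0)
  next
    case (Suc k)
    then show ?thesis
      using morph_mem[OF morph_d z] d_d[where i=k] z V.subspace_0[OF prec_subspace]
      by (simp add: cyc_Suc)
  qed
next
  fix p assume "p \<in> prec (F i) g"
  then show "p \<in> cyc F d g i"
    using prec_subset[OF pmod] morph_prec[OF morph_d] by (cases i) (auto simp: cyc_0 cyc_Suc)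
qed

text \<open>If \<open>d\<^sub>i x\<close> is a translate of a boundary \<open>d\<^sub>i q\<close> from an earlier degree, then \<open>x\<close> differs
  from the translate of \<open>q\<close>, which lies in \<open>F\<^sub>\<prec>\<^sub>g\<close>, by a cycle of \<open>d\<^sub>i\<close>, hence by a boundary.\<close>

lemma mem_bnd_if_d_translate_boundary:
  assumes x: "x \<in> sp (F (Suc i)) g" and h: "h < g" and q: "q \<in> sp (F (Suc i)) h"
    and eq: "d i g x = act (F i) h (g - h) (d i h q)"
  shows "x \<in> bnd F d g (Suc i)"
proof -
  define a where "a = act (F (Suc i)) h (g - h) q"
  have a: "a \<in> sp (F (Suc i)) g"
    unfolding a_def using h q by (intro act_mem[OF pmod]) auto
  have "d i g a = d i g x"
    unfolding a_def eq using h q by (simp add: morph_act[OF morph_d])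
  then have "d i g (x - a) = 0"
    by (simp add: morph_diff[OF morph_d x a])
  then obtain w where "w \<in> sp (F (Suc (Suc i))) g" "x - a = d (Suc i) g w"
    using exact_d[OF V.subspace_diff[OF subspace x a]] by blast
  then have "x - a \<in> bnd F d g (Suc i)"
    by (simp add: d_mem_bnd)
  moreover have "a \<in> bnd F d g (Suc i)"
    unfolding a_def using act_mem_prec[OF h q] prec_subset_bnd by blast
  ultimately have "(x - a) + a \<in> bnd F d g (Suc i)"
    by (rule V.subspace_add[OF bnd_subspace])
  then show ?thesis
    by simp
qed

lemma cyc_subset_bnd_Suc_Suc: "cyc F d g (Suc (Suc i)) \<subseteq> bnd F d g (Suc (Suc i))"
proof
  fix x assume "x \<in> cyc F d g (Suc (Suc i))"
  then have x: "x \<in> sp (F (Suc (Suc i))) g" and "d (Suc i) g x \<in> prec (F (Suc i)) g"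
    by (auto simp: cyc_Suc)
  then obtain h y where h: "h < g" and y: "y \<in> sp (F (Suc i)) h"
    and dx: "d (Suc i) g x = act (F (Suc i)) h (g - h) y"
    by (elim prec_translateE[OF pmod])
  have "act (F i) h (g - h) (d i h y) = d i g (d (Suc i) g x)"
    using h y by (simp add: dx morph_act[OF morph_d])
  also have "\<dots> = 0"
    using d_d[OF x] .
  finally have "d i h y = 0"
    using h by (intro free_act_eq_0[OF free _ morph_mem[OF morph_d y]]) auto
  then obtain q where q: "q \<in> sp (F (Suc (Suc i))) h" "y = d (Suc i) h q"
    using exact_d[OF y] by blast
  show "x \<in> bnd F d g (Suc (Suc i))"
    using mem_bnd_if_d_translate_boundary[OF x h q(1)] dx q(2) by simp
qed

lemma nontrivial_homology_subset: "{i. \<not> cyc F d g i \<subseteq> bnd F d g i} \<subseteq> {0, 1}"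
proof
  fix i assume i: "i \<in> {i. \<not> cyc F d g i \<subseteq> bnd F d g i}"
  show "i \<in> {0, 1}"
  proof (cases i)
    case (Suc k)
    then show ?thesis
      using i cyc_subset_bnd_Suc_Suc by (cases k) auto
  qed simp
qed

lemma chiO_eq_diff:
  "chiO F d g = int (qdim (cyc F d g 0) (bnd F d g 0)) - int (qdim (cyc F d g 1) (bnd F d g 1))"
proof -
  let ?t = "\<lambda>i. (-1) ^ i * int (qdim (cyc F d g i) (bnd F d g i))"
  have "?t i = 0" if "cyc F d g i \<subseteq> bnd F d g i" for i
    using qdim_eq_0_if_subset_span[OF subset_trans[OF that V.span_superset]] by simp
  then have "sum ?t {i. \<not> cyc F d g i \<subseteq> bnd F d g i} = sum ?t {0, 1}"
    using nontrivial_homology_subset by (intro sum.mono_neutral_left) auto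
  then show ?thesis
    by (simp add: chiO_def)
qed

lemma mem_bnd_0_if_e_zero:
  assumes "x \<in> sp (F 0) g" and "e g x = 0"
  shows "x \<in> bnd F d g 0"
proof -
  obtain z where "z \<in> sp (F 1) g" "x = d 0 g z"
    using exact_e[OF assms] by blast
  then show ?thesis
    using d_mem_bnd[of z 0 g] by simp
qed

lemma mem_bnd_1_if_e_zero:
  assumes "x \<in> sp (F 1) g" "h < g" "y \<in> sp (F 0) h"
    and "d 0 g x = act (F 0) h (g - h) y" and "e h y = 0"
  shows "x \<in> bnd F d g 1"
proof -
  obtain q where "q \<in> sp (F 1) h" "y = d 0 h q"
    using exact_e[OF assms(3,5)] by blast
  then show ?thesis
    using mem_bnd_if_d_translate_boundary[of x 0 g h q] assms(1,2,4) by simp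
qed

lemma cyc_1_translate:
  assumes "x \<in> cyc F d g 1" and "h0 < g"
  shows "\<exists>h y. h0 \<le> h \<and> h < g \<and> y \<in> sp (F 0) h \<and> d 0 g x = act (F 0) h (g - h) y"
  using assms prec_translate[OF pmod] by (simp add: cyc_Suc)

lemma cyc_1_translateE:
  assumes "x \<in> cyc F d g 1"
  obtains h y where "h < g" "y \<in> sp (F 0) h" "d 0 g x = act (F 0) h (g - h) y"
  using cyc_1_translate[OF assms, of "g - 1"] by auto

lemma cyc_1_common_translate:
  assumes "finite C" "C \<subseteq> cyc F d g 1"
  obtains H y where "H < g" "\<And>x. x \<in> C \<Longrightarrow> y x \<in> sp (F 0) H"
    "\<And>x. x \<in> C \<Longrightarrow> d 0 g x = act (F 0) H (g - H) (y x)"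
proof -
  have "\<exists>h y. h < g \<and> y \<in> sp (F 0) h \<and> d 0 g x = act (F 0) h (g - h) y" if x: "x \<in> C" for x
  proof -
    have "x \<in> cyc F d g 1"
      using x assms(2) by blast
    then obtain h y where "h < g" "y \<in> sp (F 0) h" "d 0 g x = act (F 0) h (g - h) y"
      by (rule cyc_1_translateE)
    then show ?thesis
      by blast
  qed
  then obtain h y where hy: "\<And>x. x \<in> C \<Longrightarrow> h x < g \<and> y x \<in> sp (F 0) (h x) \<and>
      d 0 g x = act (F 0) (h x) (g - h x) (y x)"
    by metis
  define H where "H = Max (insert (g - 1) (h ` C))"
  have H: "H < g" "\<And>x. x \<in> C \<Longrightarrow> h x \<le> H"
    unfolding H_def using assms(1) hy by auto
  show thesis
  proof (rule that[OF H(1)])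
    fix x assume x: "x \<in> C"
    show "act (F 0) (h x) (H - h x) (y x) \<in> sp (F 0) H"
      using hy[OF x] H(2)[OF x] by (simp add: act_mem[OF pmod])
    show "d 0 g x = act (F 0) H (g - H) (act (F 0) (h x) (H - h x) (y x))"
      using hy[OF x] H(1) H(2)[OF x] by (simp add: act_act[OF pmod])
  qed
qed

end

definition dim_bounded :: "('i, 'k::field) pmod \<Rightarrow> nat \<Rightarrow> bool" where
  "dim_bounded M n \<longleftrightarrow> (\<forall>g. \<exists>P. finite P \<and> card P \<le> n \<and> sp M g \<subseteq> V.span P)"

context resolution
begin

lemma qfin_0:
  assumes "dim_bounded M n"
  shows "qfin (cyc F d g 0) (bnd F d g 0)"
proof (rule qfin_if_bounded_dependence[OF bnd_subset_cyc])
  fix C assume C: "C \<subseteq> cyc F d g 0" "finite C" "card C = Suc n"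
  obtain P where P: "finite P" "card P \<le> n" "sp M g \<subseteq> V.span P"
    using assms unfolding dim_bounded_def by blast
  have C_F: "\<And>x. x \<in> C \<Longrightarrow> x \<in> sp (F 0) g"
    using C(1) by (auto simp: cyc_0)
  have eP: "e g x \<in> V.span P" if "x \<in> C" for x
    using morph_mem[OF morph_e C_F[OF that]] P(3) by blast
  obtain c where c: "\<exists>x\<in>C. c x \<noteq> 0" "(\<Sum>x\<in>C. vscale (c x) (e g x)) = 0"
    using nontrivial_relation_if_card_exceeds[where m="e g", OF C(2,3) eP P(1,2)] by blast
  have "(\<Sum>x\<in>C. vscale (c x) x) \<in> sp (F 0) g"
    using C_F by (rule subspace_lincomb[OF subspace])
  moreover have "e g (\<Sum>x\<in>C. vscale (c x) x) = 0"
    using c(2) by (simp add: morph_lincomb[OF morph_e C_F])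
  ultimately have "(\<Sum>x\<in>C. vscale (c x) x) \<in> bnd F d g 0"
    by (rule mem_bnd_0_if_e_zero)
  with c(1) show "\<exists>c. (\<exists>x\<in>C. c x \<noteq> 0) \<and> (\<Sum>x\<in>C. vscale (c x) x) \<in> bnd F d g 0"
    by blast
qed

lemma qfin_1:
  assumes "dim_bounded M n"
  shows "qfin (cyc F d g 1) (bnd F d g 1)"
proof (rule qfin_if_bounded_dependence[OF bnd_subset_cyc])
  fix C assume C: "C \<subseteq> cyc F d g 1" "finite C" "card C = Suc n"
  obtain H y where H: "H < g" and y: "\<And>x. x \<in> C \<Longrightarrow> y x \<in> sp (F 0) H"
    and dx: "\<And>x. x \<in> C \<Longrightarrow> d 0 g x = act (F 0) H (g - H) (y x)"
    by (rule cyc_1_common_translate[OF C(2,1)]) auto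
  obtain P where P: "finite P" "card P \<le> n" "sp M H \<subseteq> V.span P"
    using assms unfolding dim_bounded_def by blast
  have eP: "e H (y x) \<in> V.span P" if "x \<in> C" for x
    using morph_mem[OF morph_e y[OF that]] P(3) by blast
  obtain c where c: "\<exists>x\<in>C. c x \<noteq> 0" "(\<Sum>x\<in>C. vscale (c x) (e H (y x))) = 0"
    using nontrivial_relation_if_card_exceeds[where m="\<lambda>x. e H (y x)", OF C(2,3) eP P(1,2)] by blast
  have C_F: "\<And>x. x \<in> C \<Longrightarrow> x \<in> sp (F 1) g"
    using C(1) by (auto simp: cyc_Suc)
  have "d 0 g (\<Sum>x\<in>C. vscale (c x) x) = (\<Sum>x\<in>C. vscale (c x) (act (F 0) H (g - H) (y x)))"
    by (simp add: morph_lincomb[OF morph_d0 C_F] dx)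
  also have "\<dots> = act (F 0) H (g - H) (\<Sum>x\<in>C. vscale (c x) (y x))"
    using H y by (simp add: act_lincomb[OF pmod])
  finally have "d 0 g (\<Sum>x\<in>C. vscale (c x) x) = act (F 0) H (g - H) (\<Sum>x\<in>C. vscale (c x) (y x))" .
  moreover have "e H (\<Sum>x\<in>C. vscale (c x) (y x)) = 0"
    using c(2) by (simp add: morph_lincomb[OF morph_e y])
  moreover have "(\<Sum>x\<in>C. vscale (c x) x) \<in> sp (F 1) g"
    using C_F by (rule subspace_lincomb[OF subspace])
  moreover have "(\<Sum>x\<in>C. vscale (c x) (y x)) \<in> sp (F 0) H"
    using y by (rule subspace_lincomb[OF subspace])
  ultimately have "(\<Sum>x\<in>C. vscale (c x) x) \<in> bnd F d g 1"
    using H by (intro mem_bnd_1_if_e_zero)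
  with c(1) show "\<exists>c. (\<exists>x\<in>C. c x \<noteq> 0) \<and> (\<Sum>x\<in>C. vscale (c x) x) \<in> bnd F d g 1"
    by blast
qed

lemma critical_series_if_dim_bounded:
  assumes "dim_bounded M n"
  shows "critical_series F d"
  unfolding critical_series_def
proof (intro allI conjI)
  fix g i
  show "qfin (cyc F d g i) (bnd F d g i)"
  proof (cases i)
    case 0
    then show ?thesis
      using qfin_0[OF assms] by simp
  next
    case (Suc k)
    then show ?thesis
      using qfin_1[OF assms] qfin_if_subset_span[OF subset_trans[OF cyc_subset_bnd_Suc_Suc V.span_superset]]
      by (cases k) auto
  qed
next
  fix g
  show "finite {i. \<not> cyc F d g i \<subseteq> bnd F d g i}"
    using nontrivial_homology_subset by (rule finite_subset) simp
qed

end

lemma dim_bounded_if_image_of_fg_free: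
  assumes "fg_free F" and p: "morph F M p" and surj: "\<And>g. p g ` sp F g = sp M g"
  shows "\<exists>n. dim_bounded M n"
proof -
  obtain J where J: "finite J" "free_basis F J"
    using assms(1) by (auto simp: fg_free_def)
  have "\<exists>P. finite P \<and> card P \<le> card J \<and> sp M g \<subseteq> V.span P" for g
  proof (intro exI conjI)
    let ?T = "{t\<in>J. snd t \<le> g}"
    have T: "finite ?T" "translate F g ` ?T \<subseteq> sp F g"
      using J free_basis_mem[OF J(2)] by (auto intro: translate_mem[OF morph_pmod_dom[OF p]])
    have "sp M g \<subseteq> p g ` V.span (translate F g ` ?T)"
      using free_basis_span[OF J(2)] surj by blast
    also have "\<dots> \<subseteq> V.span (p g ` translate F g ` ?T)"
      using linear_on_span_image[OF pmod_subspace[OF morph_pmod_dom[OF p]] morph_linear[OF p] T(2)]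
      by blast
    finally show "sp M g \<subseteq> V.span (p g ` translate F g ` ?T)" .
    show "finite (p g ` translate F g ` ?T)"
      using T(1) by simp
    have "card (p g ` translate F g ` ?T) \<le> card (translate F g ` ?T)"
      using T(1) by (intro card_image_le) simp
    also have "\<dots> \<le> card ?T"
      using T(1) by (rule card_image_le)
    also have "\<dots> \<le> card J"
      using J(1) by (intro card_mono) auto
    finally show "card (p g ` translate F g ` ?T) \<le> card J" .
  qed
  then show ?thesis
    unfolding dim_bounded_def by blast
qed

lemma finitely_presented_dim_bounded:
  fixes M :: "('i, 'k::field) pmod"
  assumes "finitely_presented M"
  shows "\<exists>n. dim_bounded M n"
proof -
  obtain F0 :: "(nat, 'k) pmod" and F1 :: "(nat, 'k) pmod" and d p
    where "fg_free F0" "morph F0 M p" "\<forall>g. p g ` sp F0 g = sp M g \<and> {x\<in>sp F0 g. p g x = vzero} = d g ` sp F1 g"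
    using assms unfolding finitely_presented_def by (elim conjE exE)
  then show ?thesis
    by (intro dim_bounded_if_image_of_fg_free) auto
qed

section \<open>The Euler characteristic of a barcode\<close>

lemma finite_bounded_below:
  assumes "finite A" "\<And>a. a \<in> A \<Longrightarrow> a < g" "h < (g::real)"
  shows "\<exists>H. h \<le> H \<and> H < g \<and> (\<forall>a\<in>A. a \<le> H)"
  using assms by (intro exI[of _ "Max (insert h A)"]) simp

definition coords_in :: "nat set \<Rightarrow> (nat \<Rightarrow> 'k::field) \<Rightarrow> (nat \<Rightarrow> 'k)" where
  "coords_in S v = (\<lambda>j. if j \<in> S then v j else 0)"

lemma coords_in_add: "coords_in S (v + w) = coords_in S v + coords_in S w"
  by (simp add: coords_in_def fun_eq_iff plus_fun_apply)

lemma coords_in_scale: "coords_in S (vscale c v) = vscale c (coords_in S v)"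
  by (simp add: coords_in_def fun_eq_iff vscale_def)

lemma coords_in_zero: "coords_in S 0 = 0"
  by (simp add: coords_in_def fun_eq_iff zero_fun_apply)

lemma coords_in_eq_0_iff: "coords_in S v = 0 \<longleftrightarrow> (\<forall>j\<in>S. v j = 0)"
  by (auto simp: coords_in_def fun_eq_iff zero_fun_apply)

lemma coords_in_id: "(\<And>j. v j \<noteq> 0 \<Longrightarrow> j \<in> S) \<Longrightarrow> coords_in S v = v"
  by (auto simp: coords_in_def fun_eq_iff)

lemma coords_in_supported: "coords_in S v j \<noteq> 0 \<Longrightarrow> j \<in> S"
  by (simp add: coords_in_def split: if_splits)

locale barcode_resolution = resolution M F d e
  for M :: "('i, 'k::field) pmod" and F :: "nat \<Rightarrow> ('j, 'k) pmod" and d e +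
  fixes bars :: "(real \<times> real) list" and f :: "real \<Rightarrow> ('i \<Rightarrow> 'k) \<Rightarrow> (nat \<Rightarrow> 'k)"
  assumes bars_pos: "\<forall>(al, len)\<in>set bars. 0 < len"
    and morph_f: "morph M (region_sum bars :: (nat, 'k) pmod) f"
    and bij_f: "\<And>g. bij_betw (f g) (sp M g) (sp (region_sum bars :: (nat, 'k) pmod) g)"
begin

abbreviation R :: "(nat, 'k) pmod" where
  "R \<equiv> region_sum bars"

definition birth :: "nat \<Rightarrow> real" where
  "birth j = fst (bars ! j)"

definition death :: "nat \<Rightarrow> real" where
  "death j = fst (bars ! j) + snd (bars ! j)"

definition births :: "real \<Rightarrow> nat set" where
  "births g = {j. j < length bars \<and> birth j = g}"

definition deaths :: "real \<Rightarrow> nat set" where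
  "deaths g = {j. j < length bars \<and> death j = g}"

lemma finite_births: "finite (births g)"
  by (simp add: births_def)

lemma finite_deaths: "finite (deaths g)"
  by (simp add: deaths_def)

lemma birth_less_death:
  assumes "j < length bars"
  shows "birth j < death j"
proof -
  obtain a l where bj: "bars ! j = (a, l)"
    by fastforce
  then have "(a, l) \<in> set bars"
    using nth_mem[OF assms] by simp
  then have "0 < l"
    using bars_pos by blast
  then show ?thesis
    by (simp add: birth_def death_def bj)
qed

lemma sp_R: "sp R g = {v. \<forall>j. v j \<noteq> 0 \<longrightarrow> j < length bars \<and> birth j \<le> g \<and> g < death j}"
  by (simp add: region_sum_def birth_def death_def)

lemma act_R: "act R h s v = (\<lambda>j. if j < length bars \<and> h + s < death j then v j else 0)"
  by (simp add: region_sum_def death_def)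

lemma C_coeff_eq_card: "C_coeff bars g = int (card (births g)) - int (card (deaths g))"
proof -
  have "length (filter (\<lambda>(al, len). al = g) bars) = card (births g)"
    by (simp add: length_filter_conv_card births_def birth_def case_prod_beta)
  moreover have "length (filter (\<lambda>(al, len). al + len = g) bars) = card (deaths g)"
    by (simp add: length_filter_conv_card deaths_def death_def case_prod_beta)
  ultimately show ?thesis
    by (simp add: C_coeff_def)
qed

definition bar_map :: "real \<Rightarrow> ('j \<Rightarrow> 'k) \<Rightarrow> (nat \<Rightarrow> 'k)" where
  "bar_map g x = f g (e g x)"

lemma morph_bar_map: "morph (F 0) R bar_map"
  unfolding bar_map_def by (rule morph_comp[OF morph_e morph_f])

lemma bar_map_eq_0_iff:
  assumes "x \<in> sp (F 0) g"
  shows "bar_map g x = 0 \<longleftrightarrow> e g x = 0"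
proof
  assume "bar_map g x = 0"
  then have "f g (e g x) = f g 0"
    by (simp add: bar_map_def morph_zero[OF morph_f])
  then show "e g x = 0"
    by (rule inj_onD[OF bij_betw_imp_inj_on[OF bij_f] _ morph_mem[OF morph_e assms]
          V.subspace_0[OF pmod_subspace[OF morph_pmod_dom[OF morph_f]]]])
qed (simp add: bar_map_def morph_zero[OF morph_f])

lemma bar_map_surj:
  assumes "v \<in> sp R g"
  obtains y where "y \<in> sp (F 0) g" "bar_map g y = v"
proof -
  have "v \<in> f g ` sp M g"
    using assms bij_betw_imp_surj_on[OF bij_f] by simp
  then obtain m where m: "m \<in> sp M g" "v = f g m"
    by blast
  then have "m \<in> e g ` sp (F 0) g"
    using e_surj by simp
  then obtain y where "y \<in> sp (F 0) g" "m = e g y"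
    by blast
  then show thesis
    using that m(2) by (simp add: bar_map_def)
qed

lemma sp_R_translate:
  assumes supp: "\<And>j. v j \<noteq> 0 \<Longrightarrow> j < length bars \<and> birth j < g \<and> g < death j"
  obtains H where "H < g" "v \<in> sp R H" "act R H (g - H) v = v"
proof -
  let ?A = "birth ` {j. j < length bars \<and> birth j < g}"
  have "finite ?A" "\<And>a. a \<in> ?A \<Longrightarrow> a < g" "g - 1 < g"
    by auto
  then obtain H where H: "H < g" "\<forall>a\<in>?A. a \<le> H"
    using finite_bounded_below by blast
  have v_j: "j < length bars \<and> birth j \<le> H \<and> H < death j \<and> g < death j" if "v j \<noteq> 0" for j
    using supp[OF that] H by auto
  have "v \<in> sp R H"
    unfolding sp_R using v_j by blast
  moreover have "act R H (g - H) v j = v j" for j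
    using v_j[of j] by (cases "v j = 0") (auto simp: act_R)
  then have "act R H (g - H) v = v"
    by (rule ext)
  ultimately show thesis
    using that H(1) by blast
qed

definition birth_coords :: "real \<Rightarrow> ('j \<Rightarrow> 'k) \<Rightarrow> (nat \<Rightarrow> 'k)" where
  "birth_coords g x = coords_in (births g) (bar_map g x)"

lemma birth_coords_linear: "linear_on (sp (F 0) g) (birth_coords g)"
  unfolding birth_coords_def
  by (rule linear_onI) (simp_all add: morph_add[OF morph_bar_map] morph_scale[OF morph_bar_map]
      coords_in_add coords_in_scale)

lemma birth_coords_image: "birth_coords g ` sp (F 0) g = {v. \<forall>j. v j \<noteq> 0 \<longrightarrow> j \<in> births g}"
proof (intro equalityI subsetI)
  fix v assume "v \<in> birth_coords g ` sp (F 0) g"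
  then show "v \<in> {v. \<forall>j. v j \<noteq> 0 \<longrightarrow> j \<in> births g}"
    by (auto simp: birth_coords_def intro: coords_in_supported)
next
  fix v :: "nat \<Rightarrow> 'k" assume "v \<in> {v. \<forall>j. v j \<noteq> 0 \<longrightarrow> j \<in> births g}"
  then have supp: "\<And>j. v j \<noteq> 0 \<Longrightarrow> j \<in> births g"
    by blast
  have "j < length bars \<and> birth j \<le> g \<and> g < death j" if "v j \<noteq> 0" for j
    using supp[OF that] birth_less_death[of j] by (simp add: births_def)
  then have "v \<in> sp R g"
    unfolding sp_R by blast
  then obtain y where y: "y \<in> sp (F 0) g" "bar_map g y = v"
    by (rule bar_map_surj)
  then have "v = birth_coords g y"
    using supp by (simp add: birth_coords_def coords_in_id)
  then show "v \<in> birth_coords g ` sp (F 0) g"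
    using y(1) by (rule image_eqI)
qed

lemma birth_coords_prec:
  assumes "p \<in> prec (F 0) g"
  shows "birth_coords g p = 0"
proof -
  obtain h y where h: "h < g" "y \<in> sp (F 0) h" "p = act (F 0) h (g - h) y"
    using prec_translateE[OF pmod assms] .
  have "bar_map g p = act R h (g - h) (bar_map h y)"
    using h by (simp add: morph_act[OF morph_bar_map])
  moreover have "bar_map h y j = 0" if "j \<in> births g" for j
  proof (rule ccontr)
    assume "bar_map h y j \<noteq> 0"
    then have "birth j \<le> h"
      using morph_mem[OF morph_bar_map h(2)] unfolding sp_R by blast
    then show False
      using that h(1) by (simp add: births_def)
  qed
  ultimately show ?thesis
    by (simp add: birth_coords_def coords_in_eq_0_iff act_R)
qed

lemma birth_coords_kernel: "{x\<in>sp (F 0) g. birth_coords g x = 0} = bnd F d g 0"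
proof (intro equalityI subsetI)
  fix x assume "x \<in> {x\<in>sp (F 0) g. birth_coords g x = 0}"
  then have x: "x \<in> sp (F 0) g" and zero: "\<forall>j\<in>births g. bar_map g x j = 0"
    by (auto simp: birth_coords_def coords_in_eq_0_iff)
  have v: "bar_map g x \<in> sp R g"
    by (rule morph_mem[OF morph_bar_map x])
  have supp: "j < length bars \<and> birth j < g \<and> g < death j" if "bar_map g x j \<noteq> 0" for j
  proof -
    have "j < length bars" "birth j \<le> g" "g < death j"
      using v that unfolding sp_R by auto
    moreover have "j \<notin> births g"
      using zero that by blast
    ultimately show ?thesis
      by (auto simp: births_def)
  qed
  obtain H where H: "H < g" "bar_map g x \<in> sp R H" "act R H (g - H) (bar_map g x) = bar_map g x"
    by (rule sp_R_translate[OF supp]) auto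
  obtain y where y: "y \<in> sp (F 0) H" "bar_map H y = bar_map g x"
    using bar_map_surj[OF H(2)] by blast
  define a where "a = act (F 0) H (g - H) y"
  have a: "a \<in> sp (F 0) g" "a \<in> bnd F d g 0"
    unfolding a_def using H(1) y(1) act_mem_prec[OF H(1) y(1)] prec_subset_bnd
    by (auto intro: act_mem[OF pmod])
  have "bar_map g a = act R H (g - H) (bar_map H y)"
    unfolding a_def using H(1) y(1) by (simp add: morph_act[OF morph_bar_map])
  then have "bar_map g (x - a) = 0"
    using H(3) y(2) by (simp add: morph_diff[OF morph_bar_map x a(1)])
  then have "x - a \<in> bnd F d g 0"
    by (simp add: mem_bnd_0_if_e_zero bar_map_eq_0_iff V.subspace_diff[OF subspace x a(1)])
  then have "(x - a) + a \<in> bnd F d g 0"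
    using a(2) by (rule V.subspace_add[OF bnd_subspace])
  then show "x \<in> bnd F d g 0"
    by simp
next
  fix x assume "x \<in> bnd F d g 0"
  moreover have "bnd F d g 0 \<subseteq> {x\<in>sp (F 0) g. birth_coords g x = 0}"
    unfolding bnd_eq_span
  proof (rule V.span_minimal[OF _ kernel_subspace[OF subspace birth_coords_linear]], safe)
    fix z assume "z \<in> sp (F (Suc 0)) g"
    then show "d 0 g z \<in> sp (F 0) g" "birth_coords g (d 0 g z) = 0"
      using morph_mem[OF morph_d0] e_d
      by (auto simp: birth_coords_def bar_map_def morph_zero[OF morph_f] coords_in_zero)
  next
    fix p assume "p \<in> prec (F 0) g"
    then show "p \<in> sp (F 0) g" "birth_coords g p = 0"
      using prec_subset[OF pmod] birth_coords_prec by auto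
  qed
  ultimately show "x \<in> {x\<in>sp (F 0) g. birth_coords g x = 0}"
    by blast
qed

lemma qdim_0_eq_card_births: "qdim (cyc F d g 0) (bnd F d g 0) = card (births g)"
  using qdim_eq_card_if_coordinates[OF subspace bnd_subset_cyc[of g 0, unfolded cyc_0]
      birth_coords_linear birth_coords_image birth_coords_kernel finite_births]
  by (simp add: cyc_0)

text \<open>A cycle \<open>x\<close> of degree 1 has \<open>d\<^sub>0 x\<close> translated from some \<open>y\<close> of degree \<open>h < g\<close> with \<open>e y\<close>
  killed on the way to \<open>g\<close>; the coordinates of \<open>e y\<close> on the bars dying at \<open>g\<close> do not depend
  on the choice of \<open>h\<close> and \<open>y\<close>.\<close>

definition death_coords :: "real \<Rightarrow> ('j \<Rightarrow> 'k) \<Rightarrow> (nat \<Rightarrow> 'k)" where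
  "death_coords g x = (SOME v. \<exists>h y. h < g \<and> y \<in> sp (F 0) h \<and> d 0 g x = act (F 0) h (g - h) y \<and>
                                 v = coords_in (deaths g) (bar_map h y))"

lemma death_coords_translate_le:
  assumes hh': "h \<le> h'" "h' < g" and y: "y \<in> sp (F 0) h" and y': "y' \<in> sp (F 0) h'"
    and eq: "act (F 0) h (g - h) y = act (F 0) h' (g - h') y'"
  shows "coords_in (deaths g) (bar_map h y) = coords_in (deaths g) (bar_map h' y')"
proof -
  have "act (F 0) h' (g - h') (act (F 0) h (h' - h) y) = act (F 0) h' (g - h') y'"
    using hh' y eq by (simp add: act_act[OF pmod])
  moreover have "act (F 0) h (h' - h) y \<in> sp (F 0) h'"
    using hh'(1) y by (rule act_mem[OF pmod])
  ultimately have "act (F 0) h (h' - h) y = y'"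
    using hh'(2) y' by (auto intro: free_act_inj[OF free, of h' g])
  then have "bar_map h' y' = act R h (h' - h) (bar_map h y)"
    using hh'(1) y by (auto simp: morph_act[OF morph_bar_map])
  then show ?thesis
    using hh' by (auto simp: coords_in_def act_R deaths_def fun_eq_iff)
qed

lemma death_coords_translate:
  assumes "h < g" "h' < g" "y \<in> sp (F 0) h" "y' \<in> sp (F 0) h'"
    and "act (F 0) h (g - h) y = act (F 0) h' (g - h') y'"
  shows "coords_in (deaths g) (bar_map h y) = coords_in (deaths g) (bar_map h' y')"
  using assms death_coords_translate_le[of h h' g y y'] death_coords_translate_le[of h' h g y' y]
  by (cases "h \<le> h'") auto

lemma death_coords_eq:
  assumes h: "h < g" and y: "y \<in> sp (F 0) h" and dx: "d 0 g x = act (F 0) h (g - h) y"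
  shows "death_coords g x = coords_in (deaths g) (bar_map h y)"
proof -
  let ?P = "\<lambda>v. \<exists>h y. h < g \<and> y \<in> sp (F 0) h \<and> d 0 g x = act (F 0) h (g - h) y \<and>
                     v = coords_in (deaths g) (bar_map h y)"
  have "\<exists>v. ?P v"
    using h y dx by blast
  then have "?P (SOME v. ?P v)"
    by (rule someI_ex)
  then have "?P (death_coords g x)"
    unfolding death_coords_def .
  then obtain h' y' where "h' < g" "y' \<in> sp (F 0) h'" "d 0 g x = act (F 0) h' (g - h') y'"
    and "death_coords g x = coords_in (deaths g) (bar_map h' y')"
    by blast
  then show ?thesis
    using death_coords_translate[OF h _ y, of h' y'] dx by simp
qed

lemma death_coords_linear: "linear_on (cyc F d g 1) (death_coords g)"
proof (rule linear_onI)
  fix x x' assume "x \<in> cyc F d g 1" "x' \<in> cyc F d g 1"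
  then have "{x, x'} \<subseteq> cyc F d g 1"
    by blast
  obtain H y where H: "H < g" and y: "\<And>z. z \<in> {x, x'} \<Longrightarrow> y z \<in> sp (F 0) H"
    and dz: "\<And>z. z \<in> {x, x'} \<Longrightarrow> d 0 g z = act (F 0) H (g - H) (y z)"
    by (rule cyc_1_common_translate[OF _ \<open>{x, x'} \<subseteq> cyc F d g 1\<close>]) auto
  have "x \<in> sp (F 1) g" "x' \<in> sp (F 1) g"
    using \<open>x \<in> cyc F d g 1\<close> \<open>x' \<in> cyc F d g 1\<close> by (simp_all add: cyc_Suc)
  then have "d 0 g (x + x') = act (F 0) H (g - H) (y x + y x')"
    using H y dz by (simp add: morph_add[OF morph_d0] act_add[OF pmod])
  then have "death_coords g (x + x') = coords_in (deaths g) (bar_map H (y x + y x'))"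
    using H y by (intro death_coords_eq V.subspace_add[OF subspace]) auto
  also have "\<dots> = death_coords g x + death_coords g x'"
    using death_coords_eq[OF H y dz, of x] death_coords_eq[OF H y dz, of x'] y[of x] y[of x']
    by (simp add: morph_add[OF morph_bar_map] coords_in_add)
  finally show "death_coords g (x + x') = death_coords g x + death_coords g x'" .
next
  fix c x assume x: "x \<in> cyc F d g 1"
  then obtain h y where h: "h < g" "y \<in> sp (F 0) h" "d 0 g x = act (F 0) h (g - h) y"
    by (rule cyc_1_translateE)
  have "x \<in> sp (F 1) g"
    using x by (simp add: cyc_Suc)
  then have "d 0 g (vscale c x) = act (F 0) h (g - h) (vscale c y)"
    using h by (simp add: morph_scale[OF morph_d0] act_scale[OF pmod])
  then have "death_coords g (vscale c x) = coords_in (deaths g) (bar_map h (vscale c y))"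
    using h by (intro death_coords_eq V.subspace_scale[OF subspace]) auto
  also have "\<dots> = vscale c (death_coords g x)"
    using h by (simp add: death_coords_eq morph_scale[OF morph_bar_map] coords_in_scale)
  finally show "death_coords g (vscale c x) = vscale c (death_coords g x)" .
qed

lemma death_coords_image: "death_coords g ` cyc F d g 1 = {v. \<forall>j. v j \<noteq> 0 \<longrightarrow> j \<in> deaths g}"
proof (intro equalityI subsetI)
  fix v assume "v \<in> death_coords g ` cyc F d g 1"
  then obtain x where x: "x \<in> cyc F d g 1" "v = death_coords g x"
    by blast
  obtain h y where "h < g" "y \<in> sp (F 0) h" "d 0 g x = act (F 0) h (g - h) y"
    using x(1) by (rule cyc_1_translateE)
  then show "v \<in> {v. \<forall>j. v j \<noteq> 0 \<longrightarrow> j \<in> deaths g}"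
    using x(2) by (auto simp: death_coords_eq intro: coords_in_supported)
next
  fix v :: "nat \<Rightarrow> 'k" assume "v \<in> {v. \<forall>j. v j \<noteq> 0 \<longrightarrow> j \<in> deaths g}"
  then have supp: "\<And>j. v j \<noteq> 0 \<Longrightarrow> j \<in> deaths g"
    by blast
  let ?A = "birth ` deaths g"
  have "finite ?A" "\<And>a. a \<in> ?A \<Longrightarrow> a < g"
    using finite_deaths birth_less_death by (auto simp: deaths_def)
  then obtain H where H: "H < g" "\<forall>a\<in>?A. a \<le> H"
    using finite_bounded_below[of ?A g "g - 1"] by auto
  have "j < length bars \<and> birth j \<le> H \<and> H < death j" if "v j \<noteq> 0" for j
    using supp[OF that] H by (auto simp: deaths_def)
  then have "v \<in> sp R H"
    unfolding sp_R by blast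
  then obtain y where y: "y \<in> sp (F 0) H" "bar_map H y = v"
    by (rule bar_map_surj)
  define a where "a = act (F 0) H (g - H) y"
  have a: "a \<in> sp (F 0) g"
    unfolding a_def using H(1) y(1) by (intro act_mem[OF pmod]) auto
  have "act R H (g - H) v j = 0 j" for j
    using supp[of j] by (auto simp: act_R deaths_def zero_fun_apply)
  then have "act R H (g - H) v = 0"
    by (rule ext)
  then have "bar_map g a = 0"
    unfolding a_def using H(1) y by (simp add: morph_act[OF morph_bar_map])
  then obtain x where x: "x \<in> sp (F 1) g" "a = d 0 g x"
    using exact_e[OF a] bar_map_eq_0_iff[OF a] by blast
  have "x \<in> cyc F d g 1"
    using x act_mem_prec[OF H(1) y(1)] by (simp add: cyc_Suc a_def)
  moreover have "death_coords g x = v"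
    using death_coords_eq[OF H(1) y(1)] x(2) y(2) supp by (simp add: a_def coords_in_id)
  ultimately show "v \<in> death_coords g ` cyc F d g 1"
    by blast
qed

lemma death_coords_kernel: "{x\<in>cyc F d g 1. death_coords g x = 0} = bnd F d g 1"
proof (intro equalityI subsetI)
  fix x assume "x \<in> {x\<in>cyc F d g 1. death_coords g x = 0}"
  then have x: "x \<in> cyc F d g 1" and zero: "death_coords g x = 0"
    by auto
  obtain h y where h: "h < g" and y: "y \<in> sp (F 0) h" and dx: "d 0 g x = act (F 0) h (g - h) y"
    using x by (rule cyc_1_translateE)
  have x1: "x \<in> sp (F 1) g"
    using x by (simp add: cyc_Suc)
  define v where "v = bar_map h y"
  have v: "v \<in> sp R h"
    unfolding v_def by (rule morph_mem[OF morph_bar_map y])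
  have "act R h (g - h) v = bar_map g (d 0 g x)"
    using h y by (simp add: v_def dx morph_act[OF morph_bar_map])
  also have "\<dots> = 0"
    using e_d[OF x1] by (simp add: bar_map_def morph_zero[OF morph_f])
  finally have killed: "act R h (g - h) v = 0" .
  have v_j: "j < length bars \<and> death j < g" if "v j \<noteq> 0" for j
  proof -
    have j: "j < length bars" "h < death j"
      using v that unfolding sp_R by auto
    have "\<not> g < death j"
      using fun_cong[OF killed, of j] that j(1) by (auto simp: act_R zero_fun_apply)
    moreover have "j \<notin> deaths g"
      using zero that death_coords_eq[OF h y dx] by (auto simp: coords_in_eq_0_iff v_def)
    ultimately show ?thesis
      using j(1) by (auto simp: deaths_def)
  qed
  let ?A = "death ` {j. j < length bars \<and> death j < g}"
  have "finite ?A" "\<And>a. a \<in> ?A \<Longrightarrow> a < g"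
    by auto
  then obtain H where H: "h \<le> H" "H < g" "\<forall>a\<in>?A. a \<le> H"
    using finite_bounded_below h by blast
  have "act R h (H - h) v j = 0 j" for j
    using v_j[of j] H(3) by (cases "v j = 0") (auto simp: act_R zero_fun_apply)
  then have "act R h (H - h) v = 0"
    by (rule ext)
  then have "bar_map H (act (F 0) h (H - h) y) = 0"
    using H(1) y by (simp add: v_def morph_act[OF morph_bar_map])
  moreover have b: "act (F 0) h (H - h) y \<in> sp (F 0) H"
    using H(1) y by (rule act_mem[OF pmod])
  ultimately have "e H (act (F 0) h (H - h) y) = 0"
    by (simp add: bar_map_eq_0_iff)
  moreover have "d 0 g x = act (F 0) H (g - H) (act (F 0) h (H - h) y)"
    using H y by (simp add: dx act_act[OF pmod])
  ultimately show "x \<in> bnd F d g 1"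
    using mem_bnd_1_if_e_zero[OF x1 H(2) b] by blast
next
  fix x assume "x \<in> bnd F d g 1"
  moreover have "bnd F d g 1 \<subseteq> {x\<in>cyc F d g 1. death_coords g x = 0}"
    unfolding bnd_eq_span
  proof (rule V.span_minimal[OF _ kernel_subspace[OF cyc_subspace death_coords_linear]], safe)
    fix z assume z: "z \<in> sp (F (Suc 1)) g"
    have dz: "d 0 g (d 1 g z) = act (F 0) (g - 1) (g - (g - 1)) 0"
      using d_d[of z 0 g] z act_zero[OF pmod, of "g - 1" g] by (simp add: numeral_2_eq_2)
    show "d 1 g z \<in> cyc F d g 1"
      using bnd_subset_cyc d_mem_bnd[OF z] by blast
    show "death_coords g (d 1 g z) = 0"
      using death_coords_eq[OF _ V.subspace_0[OF subspace] dz]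
      by (simp add: morph_zero[OF morph_bar_map] coords_in_zero)
  next
    fix p assume p: "p \<in> prec (F 1) g"
    show "p \<in> cyc F d g 1"
      using bnd_subset_cyc prec_subset_bnd p by blast
    obtain h q where h: "h < g" "q \<in> sp (F 1) h" "p = act (F 1) h (g - h) q"
      using prec_translateE[OF pmod p] .
    have "d 0 g p = act (F 0) h (g - h) (d 0 h q)"
      using h morph_act[OF morph_d0, of h g q] by simp
    then have "death_coords g p = coords_in (deaths g) (bar_map h (d 0 h q))"
      by (rule death_coords_eq[OF h(1) morph_mem[OF morph_d0 h(2)]])
    then show "death_coords g p = 0"
      using e_d[OF h(2)] by (simp add: bar_map_def morph_zero[OF morph_f] coords_in_zero)
  qed
  ultimately show "x \<in> {x\<in>cyc F d g 1. death_coords g x = 0}"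
    by blast
qed

lemma qdim_1_eq_card_deaths: "qdim (cyc F d g 1) (bnd F d g 1) = card (deaths g)"
  by (rule conjunct2[OF qdim_eq_card_if_coordinates[OF cyc_subspace bnd_subset_cyc
        death_coords_linear death_coords_image death_coords_kernel finite_deaths]])

lemma chiO_eq_C_coeff: "chiO F d g = C_coeff bars g"
  unfolding chiO_eq_diff qdim_0_eq_card_births qdim_1_eq_card_deaths C_coeff_eq_card ..

end

section \<open>Existence of free resolutions\<close>

definition kernel_pmod :: "('a, 'k::field) pmod \<Rightarrow> (real \<Rightarrow> ('a \<Rightarrow> 'k) \<Rightarrow> ('b \<Rightarrow> 'k)) \<Rightarrow> ('a, 'k) pmod" where
  "kernel_pmod F \<phi> = \<lparr>sp = (\<lambda>g. {x\<in>sp F g. \<phi> g x = 0}), act = act F\<rparr>"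

lemma sp_kernel_pmod: "sp (kernel_pmod F \<phi>) g = {x\<in>sp F g. \<phi> g x = 0}"
  by (simp add: kernel_pmod_def)

lemma act_kernel_pmod: "act (kernel_pmod F \<phi>) = act F"
  by (simp add: kernel_pmod_def)

lemma kernel_pmod_is_pmod:
  assumes \<phi>: "morph F F' \<phi>"
  shows "is_pmod (kernel_pmod F \<phi>)"
proof -
  have F: "is_pmod F"
    by (rule morph_pmod_dom[OF \<phi>])
  have closed: "act F g s x \<in> sp (kernel_pmod F \<phi>) (g + s)"
    if "0 \<le> s" "x \<in> sp (kernel_pmod F \<phi>) g" for g s x
  proof -
    have x: "x \<in> sp F g" "\<phi> g x = 0"
      using that(2) by (auto simp: sp_kernel_pmod)
    have "\<phi> (g + s) (act F g (g + s - g) x) = act F' g (g + s - g) (\<phi> g x)"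
      using that(1) x(1) by (intro morph_act[OF \<phi>]) auto
    then have "\<phi> (g + s) (act F g s x) = 0"
      using that(1) x(2) act_zero[OF morph_pmod_cod[OF \<phi>], of g "g + s"] by simp
    moreover have "act F g s x \<in> sp F (g + s)"
      using act_mem[OF F, of g "g + s" x] that(1) x(1) by simp
    ultimately show ?thesis
      by (simp add: sp_kernel_pmod)
  qed
  have "linear_on (sp (kernel_pmod F \<phi>) g) (act F g s)" if "0 \<le> s" for g s
    using pmod_linear_act[OF F, of g "g + s"] that unfolding linear_on_def sp_kernel_pmod by auto
  moreover have "V.subspace (sp (kernel_pmod F \<phi>) g)" for g
    unfolding sp_kernel_pmod by (rule kernel_subspace[OF pmod_subspace[OF F] morph_linear[OF \<phi>]])
  ultimately show ?thesis
    using F closed unfolding is_pmod_def is_subspace_iff act_kernel_pmod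
    by (auto simp: sp_kernel_pmod)
qed

lemma morph_kernel_inclusion:
  assumes "morph F F' \<phi>"
  shows "morph (kernel_pmod F \<phi>) F (\<lambda>g x. x)"
  using kernel_pmod_is_pmod[OF assms] morph_pmod_dom[OF assms]
  unfolding morph_def linear_on_def by (auto simp: sp_kernel_pmod act_kernel_pmod)

definition zero_pmod :: "('a, 'k::field) pmod" where
  "zero_pmod = \<lparr>sp = (\<lambda>g. {0}), act = (\<lambda>g s x. 0)\<rparr>"

lemma zero_pmod_is_pmod: "is_pmod zero_pmod"
  by (simp add: zero_pmod_def is_pmod_def is_subspace_iff linear_on_def V.scale_zero_right vadd_eq_plus)

lemma zero_pmod_is_free: "is_free zero_pmod"
  unfolding is_free_def using zero_pmod_is_pmod
  by (intro conjI exI[of _ "{}"]) (auto simp: free_basis_altdef zero_pmod_def)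

lemma morph_from_zero_pmod:
  fixes N :: "('a, 'k::field) pmod"
  assumes N: "is_pmod N"
  shows "morph (zero_pmod :: ('a, 'k) pmod) N (\<lambda>g x. 0)"
  unfolding morph_def
proof (intro conjI allI impI ballI)
  show "is_pmod zero_pmod" "is_pmod N"
    by (rule zero_pmod_is_pmod, rule N)
  fix g
  show "linear_on (sp zero_pmod g) (\<lambda>x. 0)"
    by (simp add: linear_on_def vadd_eq_plus V.scale_zero_right)
  show "(\<lambda>x. 0) ` sp zero_pmod g \<subseteq> sp N g"
    using V.subspace_0[OF pmod_subspace[OF N]] by (auto simp: zero_pmod_def)
  fix s :: real and x assume "0 \<le> s"
  then show "0 = act N g s 0"
    using act_zero[OF N, of g "g + s"] by simp
qed

text \<open>A module with injective translations that is generated in a finite set \<open>A\<close> of degrees is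
  free: complements of \<open>K\<^sub>\<prec>\<^sub>a\<close> in \<open>K\<^sub>a\<close>, \<open>a \<in> A\<close>, together form a basis.\<close>

locale generated_in_finitely_many_degrees =
  fixes K :: "('a, 'k::field) pmod" and A :: "real set"
  assumes pmod: "is_pmod K"
    and finite_A: "finite A"
    and act_eq_0: "\<And>h g x. h \<le> g \<Longrightarrow> x \<in> sp K h \<Longrightarrow> act K h (g - h) x = 0 \<Longrightarrow> x = 0"
    and generated: "\<And>g. sp K g \<subseteq> V.span (\<Union>a\<in>{a\<in>A. a \<le> g}. act K a (g - a) ` sp K a)"
begin

definition complement :: "real \<Rightarrow> ('a \<Rightarrow> 'k) set" where
  "complement a = (SOME C. C \<subseteq> sp K a \<and> sp K a \<subseteq> V.span (prec K a \<union> C) \<and> independent_mod (prec K a) C)"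

lemma complement:
  "complement a \<subseteq> sp K a" "sp K a \<subseteq> V.span (prec K a \<union> complement a)"
  "independent_mod (prec K a) (complement a)"
proof -
  obtain C where "C \<subseteq> sp K a" "sp K a \<subseteq> V.span (prec K a \<union> C)" "independent_mod (prec K a) C"
    by (rule complement_exists[OF prec_subset[OF pmod]])
  then have "\<exists>C. C \<subseteq> sp K a \<and> sp K a \<subseteq> V.span (prec K a \<union> C) \<and> independent_mod (prec K a) C"
    by blast
  then show "complement a \<subseteq> sp K a" "sp K a \<subseteq> V.span (prec K a \<union> complement a)"
    "independent_mod (prec K a) (complement a)"
    unfolding complement_def by (metis (mono_tags, lifting) someI_ex)+
qed

definition basis :: "(('a \<Rightarrow> 'k) \<times> real) set" where
  "basis = {(b, a). a \<in> A \<and> b \<in> complement a}"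

lemma basis_mem: "t \<in> basis \<Longrightarrow> fst t \<in> sp K (snd t)"
  using complement(1) by (auto simp: basis_def subset_iff)

abbreviation generators :: "real \<Rightarrow> ('a \<Rightarrow> 'k) set" where
  "generators g \<equiv> translate K g ` {t\<in>basis. snd t \<le> g}"

lemma generators_subset: "generators g \<subseteq> sp K g"
  using basis_mem by (auto intro: translate_mem[OF pmod])

lemma act_span_generators:
  assumes "h \<le> g" and "sp K h \<subseteq> V.span (generators h)"
  shows "act K h (g - h) ` sp K h \<subseteq> V.span (generators g)"
proof -
  have "act K h (g - h) ` generators h \<subseteq> generators g"
    using assms(1) basis_mem by (auto simp: act_translate[OF pmod] intro!: imageI)
  then have "act K h (g - h) ` V.span (generators h) \<subseteq> V.span (generators g)"
    using linear_on_span_image[OF pmod_subspace[OF pmod] pmod_linear_act[OF pmod assms(1)]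
        generators_subset] V.span_mono by blast
  then show ?thesis
    using assms(2) by blast
qed

lemma prec_subset_span_earlier:
  "prec K a \<subseteq> V.span (\<Union>a'\<in>{a'\<in>A. a' < a}. act K a' (a - a') ` sp K a')"
  unfolding prec_eq_span
proof (rule V.span_minimal[OF _ V.subspace_span], clarify)
  fix h y assume h: "h < a" and y: "y \<in> sp K h"
  let ?G = "\<lambda>g. \<Union>a'\<in>{a'\<in>A. a' \<le> g}. act K a' (g - a') ` sp K a'"
  have G: "?G h \<subseteq> sp K h"
    using act_mem[OF pmod] by auto
  have "act K h (a - h) y \<in> V.span (act K h (a - h) ` ?G h)"
    using h y generated[of h]
    by (intro linear_on_span_image[OF pmod_subspace[OF pmod] pmod_linear_act[OF pmod] G]) auto
  also have "act K h (a - h) ` ?G h \<subseteq> (\<Union>a'\<in>{a'\<in>A. a' < a}. act K a' (a - a') ` sp K a')"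
    using h by (auto simp: act_act[OF pmod])
  then have "V.span (act K h (a - h) ` ?G h) \<subseteq> V.span (\<Union>a'\<in>{a'\<in>A. a' < a}. act K a' (a - a') ` sp K a')"
    by (rule V.span_mono)
  finally show "act K h (a - h) y \<in> V.span (\<Union>a'\<in>{a'\<in>A. a' < a}. act K a' (a - a') ` sp K a')" .
qed

lemma sp_subset_span_generators_at: "a \<in> A \<Longrightarrow> sp K a \<subseteq> V.span (generators a)"
proof (induction "card {a'\<in>A. a' < a}" arbitrary: a rule: less_induct)
  case less
  have IH: "act K a' (a - a') ` sp K a' \<subseteq> V.span (generators a)" if "a' \<in> A" "a' < a" for a'
  proof (rule act_span_generators)
    have "{a''\<in>A. a'' < a'} \<subset> {a''\<in>A. a'' < a}"
      using that less.prems by force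
    then have "card {a''\<in>A. a'' < a'} < card {a''\<in>A. a'' < a}"
      using finite_A by (intro psubset_card_mono) auto
    then show "sp K a' \<subseteq> V.span (generators a')"
      using less.hyps that(1) by blast
  qed (use that in simp)
  have "complement a \<subseteq> generators a"
  proof
    fix b assume b: "b \<in> complement a"
    then have "(b, a) \<in> {t\<in>basis. snd t \<le> a}"
      using less.prems by (simp add: basis_def)
    moreover have "b = translate K a (b, a)"
      using act_shift_0[OF pmod, of b a] b complement(1)[of a] by (auto simp: translate_def)
    ultimately show "b \<in> generators a"
      by (rule rev_image_eqI)
  qed
  then have "complement a \<subseteq> V.span (generators a)"
    using V.span_superset by blast
  moreover have "V.span (\<Union>a'\<in>{a'\<in>A. a' < a}. act K a' (a - a') ` sp K a') \<subseteq> V.span (generators a)"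
    using IH by (intro V.span_minimal[OF _ V.subspace_span]) blast
  then have "prec K a \<subseteq> V.span (generators a)"
    using prec_subset_span_earlier[of a] by blast
  ultimately have "V.span (prec K a \<union> complement a) \<subseteq> V.span (generators a)"
    by (intro V.span_minimal[OF _ V.subspace_span]) blast
  then show ?case
    using complement(2)[of a] by blast
qed

lemma sp_subset_span_generators: "sp K g \<subseteq> V.span (generators g)"
proof -
  have "act K a (g - a) ` sp K a \<subseteq> V.span (generators g)" if "a \<in> A" "a \<le> g" for a
    using that sp_subset_span_generators_at by (intro act_span_generators) auto
  then have "V.span (\<Union>a\<in>{a\<in>A. a \<le> g}. act K a (g - a) ` sp K a) \<subseteq> V.span (generators g)"
    by (intro V.span_minimal[OF _ V.subspace_span]) blast
  then show ?thesis
    using generated[of g] by blast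
qed


text \<open>In a vanishing combination, the terms of top degree lie in \<open>K\<^sub>\<prec>\<^sub>m\<close> modulo the lower ones,
  so their coefficients vanish by the choice of the complements.\<close>

lemma top_degree_coefficients_vanish:
  assumes T: "finite T" "T \<subseteq> {t\<in>basis. snd t \<le> m}"
    and prec: "(\<Sum>t\<in>T. vscale (c t) (translate K m t)) \<in> prec K m"
    and t: "t \<in> T" "snd t = m"
  shows "c t = 0"
proof -
  define Top where "Top = {t\<in>T. snd t = m}"
  define Low where "Low = {t\<in>T. snd t \<noteq> m}"
  have fin: "finite Top" "finite Low" and disj: "Top \<inter> Low = {}" and TL: "T = Top \<union> Low"
    using T(1) by (auto simp: Top_def Low_def)
  have "translate K m t \<in> prec K m" if "t \<in> Low" for t
  proof -
    have "snd t < m" "fst t \<in> sp K (snd t)"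
      using that T(2) basis_mem by (force simp: Low_def)+
    then show ?thesis
      by (simp add: translate_def case_prod_beta act_mem_prec)
  qed
  then have low: "(\<Sum>t\<in>Low. vscale (c t) (translate K m t)) \<in> prec K m"
    by (rule subspace_lincomb[OF prec_subspace])
  have "(\<Sum>t\<in>T. vscale (c t) (translate K m t)) =
        (\<Sum>t\<in>Top. vscale (c t) (translate K m t)) + (\<Sum>t\<in>Low. vscale (c t) (translate K m t))"
    unfolding TL using fin disj by (rule sum.union_disjoint)
  then have "(\<Sum>t\<in>Top. vscale (c t) (translate K m t)) \<in> prec K m"
    using V.subspace_diff[OF prec_subspace prec low] by (simp add: algebra_simps)
  moreover have "(\<Sum>t\<in>Top. vscale (c t) (translate K m t)) = (\<Sum>b\<in>fst ` Top. vscale (c (b, m)) b)"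
  proof -
    have "inj_on fst Top"
      by (auto simp: Top_def inj_on_def prod_eq_iff)
    moreover have "translate K m t = fst t" "t = (fst t, m)" if "t \<in> Top" for t
      using that T(2) basis_mem act_shift_0[OF pmod] by (force simp: Top_def translate_def case_prod_beta)+
    ultimately show ?thesis
      by (simp add: sum.reindex cong: sum.cong)
  qed
  moreover have "fst ` Top \<subseteq> complement m"
    using T(2) by (force simp: Top_def basis_def)
  moreover have "t \<in> Top"
    using t by (simp add: Top_def)
  ultimately have "c (fst t, m) = 0"
    using fin(1) by (intro independent_modD[OF complement(3)[of m], where T="fst ` Top" and r="\<lambda>b. c (b, m)"])
      (auto intro: V.span_base)
  then show ?thesis
    using t(2) by (metis prod.collapse)
qed

lemma basis_independent:
  assumes "finite T" "T \<subseteq> {t\<in>basis. snd t \<le> g}"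
    and "(\<Sum>t\<in>T. vscale (c t) (translate K g t)) = 0"
  shows "\<forall>t\<in>T. c t = 0"
  using assms
proof (induction "card T" arbitrary: T rule: less_induct)
  case less
  show ?case
  proof (cases "T = {}")
    case False
    define m where "m = Max (snd ` T)"
    have "m \<in> snd ` T"
      unfolding m_def using less.prems(1) False by (intro Max_in) auto
    then obtain t0 where t0: "t0 \<in> T" "snd t0 = m"
      by blast
    have m: "m \<le> g" "\<And>t. t \<in> T \<Longrightarrow> snd t \<le> m"
      using less.prems(1,2) t0 by (auto simp: m_def)
    have mem: "\<And>t. t \<in> T \<Longrightarrow> translate K m t \<in> sp K m"
      using less.prems(2) basis_mem m(2) by (intro translate_mem[OF pmod]) auto
    have "act K m (g - m) (\<Sum>t\<in>T. vscale (c t) (translate K m t)) =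
        (\<Sum>t\<in>T. vscale (c t) (act K m (g - m) (translate K m t)))"
      by (rule act_lincomb[OF pmod m(1) mem])
    also have "\<dots> = (\<Sum>t\<in>T. vscale (c t) (translate K g t))"
    proof (rule sum.cong[OF refl])
      fix t assume t: "t \<in> T"
      then have "t \<in> basis"
        using less.prems(2) by blast
      then show "vscale (c t) (act K m (g - m) (translate K m t)) = vscale (c t) (translate K g t)"
        using act_translate[OF pmod basis_mem m(2)[OF t] m(1)] by simp
    qed
    finally have "act K m (g - m) (\<Sum>t\<in>T. vscale (c t) (translate K m t)) = 0"
      using less.prems(3) by simp
    moreover have "(\<Sum>t\<in>T. vscale (c t) (translate K m t)) \<in> sp K m"
      using mem by (rule subspace_lincomb[OF pmod_subspace[OF pmod]])
    ultimately have zero: "(\<Sum>t\<in>T. vscale (c t) (translate K m t)) = 0"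
      using act_eq_0[OF m(1)] by blast
    have top: "c t = 0" if "t \<in> T" "snd t = m" for t
    proof (rule top_degree_coefficients_vanish[OF less.prems(1) _ _ that])
      show "T \<subseteq> {t \<in> basis. snd t \<le> m}"
        using less.prems(2) m(2) by blast
      show "(\<Sum>t\<in>T. vscale (c t) (translate K m t)) \<in> prec K m"
        unfolding zero by (rule V.subspace_0[OF prec_subspace])
    qed
    define Low where "Low = {t\<in>T. snd t \<noteq> m}"
    have "card Low < card T"
      using t0 less.prems(1) by (intro psubset_card_mono) (auto simp: Low_def)
    moreover have "finite Low" "Low \<subseteq> {t\<in>basis. snd t \<le> g}"
      using less.prems(1,2) by (auto simp: Low_def)
    moreover have "(\<Sum>t\<in>T. vscale (c t) (translate K g t)) = (\<Sum>t\<in>Low. vscale (c t) (translate K g t))"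
      using top by (intro sum.mono_neutral_right[OF less.prems(1)]) (auto simp: Low_def V.scale_zero_left)
    then have "(\<Sum>t\<in>Low. vscale (c t) (translate K g t)) = 0"
      using less.prems(3) by simp
    ultimately have "\<forall>t\<in>Low. c t = 0"
      by (rule less.hyps)
    then show ?thesis
      using top unfolding Low_def by blast
  qed simp
qed

lemma free_basis: "free_basis K basis"
  unfolding free_basis_altdef
proof (intro conjI allI impI ballI)
  fix g x assume "x \<in> sp K g"
  then have "x \<in> V.span (generators g)"
    using sp_subset_span_generators by blast
  then show "\<exists>T c. finite T \<and> T \<subseteq> {t\<in>basis. snd t \<le> g} \<and> x = (\<Sum>t\<in>T. vscale (c t) (translate K g t))"
    by (rule span_image_lincomb)
qed (use basis_mem basis_independent in blast)+

lemma is_free: "is_free K"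
  using pmod free_basis by (auto simp: is_free_def)

end

lemma fg_free_imp_free: "fg_free F \<Longrightarrow> is_free F"
  by (auto simp: fg_free_def is_free_def)

lemma free_basis_translate_from:
  assumes J: "free_basis F J" and F: "is_pmod F" and x: "x \<in> sp F g" and "m \<le> g"
    and below: "\<And>t. t \<in> J \<Longrightarrow> snd t \<le> g \<Longrightarrow> snd t \<le> m"
  obtains y where "y \<in> sp F m" "x = act F m (g - m) y"
proof -
  obtain T c where T: "finite T" "T \<subseteq> {t\<in>J. snd t \<le> g}"
    and x_eq: "x = (\<Sum>t\<in>T. vscale (c t) (translate F g t))"
    using free_basis_lincomb[OF J x] .
  have T_m: "t \<in> J" "snd t \<le> m" if "t \<in> T" for t
    using that T(2) below[of t] by auto
  have mem: "translate F m t \<in> sp F m" if "t \<in> T" for t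
    using T_m[OF that] free_basis_mem[OF J] by (intro translate_mem[OF F]) auto
  have y: "(\<Sum>t\<in>T. vscale (c t) (translate F m t)) \<in> sp F m"
    using mem by (rule subspace_lincomb[OF pmod_subspace[OF F]])
  have "act F m (g - m) (\<Sum>t\<in>T. vscale (c t) (translate F m t)) =
      (\<Sum>t\<in>T. vscale (c t) (act F m (g - m) (translate F m t)))"
    by (rule act_lincomb[OF F \<open>m \<le> g\<close> mem])
  also have "\<dots> = x"
    unfolding x_eq
  proof (rule sum.cong[OF refl])
    fix t assume "t \<in> T"
    then show "vscale (c t) (act F m (g - m) (translate F m t)) = vscale (c t) (translate F g t)"
      using act_translate[OF F free_basis_mem[OF J] _ \<open>m \<le> g\<close>] T_m by simp
  qed
  finally show thesis
    using that[OF y] by simp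
qed

text \<open>Every element of the kernel in degree \<open>g\<close> is translated from the kernel in the last generator
  degree \<open>m \<le> g\<close> of \<open>F\<^sub>1\<close>: it is a translate in \<open>F\<^sub>1\<close>, and translations in \<open>F\<^sub>0\<close> are injective.\<close>

lemma kernel_pmod_generated:
  assumes \<phi>: "morph F1 F0 \<phi>" and F0: "is_free F0" and J: "free_basis F1 J" "finite J"
  shows "sp (kernel_pmod F1 \<phi>) g \<subseteq>
    V.span (\<Union>a\<in>{a\<in>snd ` J. a \<le> g}. act (kernel_pmod F1 \<phi>) a (g - a) ` sp (kernel_pmod F1 \<phi>) a)"
    (is "_ \<subseteq> V.span ?G")
proof
  fix x assume "x \<in> sp (kernel_pmod F1 \<phi>) g"
  then have x: "x \<in> sp F1 g" "\<phi> g x = 0"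
    by (auto simp: sp_kernel_pmod)
  show "x \<in> V.span ?G"
  proof (cases "{a\<in>snd ` J. a \<le> g} = {}")
    case True
    then have no_gen: "{t\<in>J. snd t \<le> g} = {}"
      by auto
    have "x \<in> V.span (translate F1 g ` {t\<in>J. snd t \<le> g})"
      using free_basis_span[OF J(1)] x(1) by blast
    then have "x = 0"
      unfolding no_gen by (simp add: V.span_empty)
    then show ?thesis
      by (simp add: V.span_zero)
  next
    case False
    define m where "m = Max {a\<in>snd ` J. a \<le> g}"
    have "m \<in> {a\<in>snd ` J. a \<le> g}"
      unfolding m_def using False J(2) by (intro Max_in) auto
    then have m: "m \<in> snd ` J" "m \<le> g"
      by auto
    have below: "snd t \<le> m" if "t \<in> J" "snd t \<le> g" for t
      unfolding m_def using that J(2) by (intro Max_ge) auto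
    obtain y where y: "y \<in> sp F1 m" "x = act F1 m (g - m) y"
      using free_basis_translate_from[OF J(1) morph_pmod_dom[OF \<phi>] x(1) m(2) below] .
    have "act F0 m (g - m) (\<phi> m y) = 0"
      using x(2) y m(2) by (simp add: morph_act[OF \<phi>])
    then have "\<phi> m y = 0"
      by (rule free_act_eq_0[OF F0 m(2) morph_mem[OF \<phi> y(1)]])
    then have "x \<in> act (kernel_pmod F1 \<phi>) m (g - m) ` sp (kernel_pmod F1 \<phi>) m"
      using y by (auto simp: sp_kernel_pmod act_kernel_pmod)
    then show ?thesis
      using m by (intro V.span_base) blast
  qed
qed

lemma kernel_pmod_is_free:
  assumes \<phi>: "morph F1 F0 \<phi>" and "fg_free F1" and F0: "is_free F0"
  shows "is_free (kernel_pmod F1 \<phi>)"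
proof -
  obtain J where J: "finite J" "free_basis F1 J"
    using assms(2) by (auto simp: fg_free_def)
  interpret generated_in_finitely_many_degrees "kernel_pmod F1 \<phi>" "snd ` J"
  proof
    show "is_pmod (kernel_pmod F1 \<phi>)"
      by (rule kernel_pmod_is_pmod[OF \<phi>])
    show "finite (snd ` J)"
      using J(1) by simp
    show "x = 0" if "h \<le> g" "x \<in> sp (kernel_pmod F1 \<phi>) h" "act (kernel_pmod F1 \<phi>) h (g - h) x = 0"
      for h g x
      using that fg_free_imp_free[OF assms(2)] free_act_eq_0
      by (auto simp: sp_kernel_pmod act_kernel_pmod)
    show "sp (kernel_pmod F1 \<phi>) g \<subseteq>
        V.span (\<Union>a\<in>{a\<in>snd ` J. a \<le> g}. act (kernel_pmod F1 \<phi>) a (g - a) ` sp (kernel_pmod F1 \<phi>) a)" for g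
      by (rule kernel_pmod_generated[OF \<phi> F0 J(2,1)])
  qed
  show ?thesis
    by (rule is_free)
qed

text \<open>A presentation \<open>F\<^sub>1 \<rightarrow> F\<^sub>0 \<rightarrow> M\<close> extends to the resolution
  \<open>0 \<rightarrow> ker(F\<^sub>1 \<rightarrow> F\<^sub>0) \<rightarrow> F\<^sub>1 \<rightarrow> F\<^sub>0 \<rightarrow> M\<close>, padded with zero modules.\<close>

lemma free_resolution_exists:
  fixes M :: "('i, 'k::field) pmod"
  assumes "finitely_presented M"
  shows "\<exists>(F :: nat \<Rightarrow> (nat, 'k) pmod) d e. free_resolution M F d e"
proof -
  obtain F0 :: "(nat, 'k) pmod" and F1 :: "(nat, 'k) pmod" and \<phi> p
    where F0: "fg_free F0" and F1: "fg_free F1" and \<phi>: "morph F1 F0 \<phi>" and p: "morph F0 M p"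
      and exact: "\<forall>g. p g ` sp F0 g = sp M g \<and> {x\<in>sp F0 g. p g x = vzero} = \<phi> g ` sp F1 g"
    using assms unfolding finitely_presented_def by (elim conjE exE)
  let ?K = "kernel_pmod F1 \<phi>"
  define F :: "nat \<Rightarrow> (nat, 'k) pmod" where
    "F i = (if i = 0 then F0 else if i = 1 then F1 else if i = 2 then ?K else zero_pmod)" for i
  define d :: "nat \<Rightarrow> real \<Rightarrow> (nat \<Rightarrow> 'k) \<Rightarrow> (nat \<Rightarrow> 'k)" where
    "d i = (if i = 0 then \<phi> else if i = 1 then (\<lambda>g x. x) else (\<lambda>g x. 0))" for i
  have Z: "is_pmod (zero_pmod :: (nat, 'k) pmod)"
    by (rule zero_pmod_is_pmod)
  have K_0: "0 \<in> sp ?K g" for g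
    by (rule V.subspace_0[OF pmod_subspace[OF kernel_pmod_is_pmod[OF \<phi>]]])
  have "free_resolution M F d p"
    unfolding free_resolution_def
  proof (intro conjI allI)
    fix i
    show "is_free (F i)"
      by (simp add: F_def zero_pmod_is_free kernel_pmod_is_free[OF \<phi> F1] fg_free_imp_free F0 F1)
    show "morph (F (Suc i)) (F i) (d i)"
      using \<phi> morph_kernel_inclusion[OF \<phi>] morph_from_zero_pmod[OF kernel_pmod_is_pmod[OF \<phi>]]
        morph_from_zero_pmod[OF Z] by (simp add: F_def d_def)
  next
    fix g i
    show "{x\<in>sp (F (Suc i)) g. d i g x = vzero} = d (Suc i) g ` sp (F (Suc (Suc i))) g"
      using K_0 by (auto simp: F_def d_def sp_kernel_pmod zero_pmod_def vzero_eq_zero)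
  qed (use p exact in \<open>simp_all add: F_def d_def\<close>)
  then show ?thesis
    by blast
qed

theorem proposition6:
  fixes M :: "('i, 'k::field) pmod"
  assumes "finitely_presented M" and "bounded_pmod M"
  shows "(\<exists>(F :: nat \<Rightarrow> (nat, 'k) pmod) d e. free_resolution M F d e) \<and>
         (\<forall>(F :: nat \<Rightarrow> ('j, 'k) pmod) d e. free_resolution M F d e \<longrightarrow>
            critical_series F d \<and>
            (\<forall>bars. barcode_decomp M bars \<longrightarrow> (\<forall>g. chiO F d g = C_coeff bars g)))"
proof (intro conjI allI impI)
  show "\<exists>(F :: nat \<Rightarrow> (nat, 'k) pmod) d e. free_resolution M F d e"
    by (rule free_resolution_exists[OF assms(1)])
  fix F :: "nat \<Rightarrow> ('j, 'k) pmod" and d e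
  assume "free_resolution M F d e"
  then interpret resolution M F d e
    by unfold_locales
  obtain n where "dim_bounded M n"
    using finitely_presented_dim_bounded[OF assms(1)] by blast
  then show "critical_series F d"
    by (rule critical_series_if_dim_bounded)
  fix bars g assume "barcode_decomp M bars"
  then obtain f where "\<forall>(al, len)\<in>set bars. 0 < len" "morph M (region_sum bars :: (nat, 'k) pmod) f"
    "\<And>g. bij_betw (f g) (sp M g) (sp (region_sum bars :: (nat, 'k) pmod) g)"
    unfolding barcode_decomp_def by blast
  then interpret barcode_resolution M F d e bars f
    by unfold_locales
  show "chiO F d g = C_coeff bars g"
    by (rule chiO_eq_C_coeff)
qed

end
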